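(* Let $T=((\Omega,\mathcal{A}),\{(\Omega,\mathcal{M}_i)\}_{i\in N},\{t_i\}_{i\in N})$ be a type space. Then exactly one of the following holds: (a) the players' beliefs in $T$ are consistent; (b) $T$ admits a money pump.
   Context: A field on a set $X$ is a collection of subsets of $X$ containing $X$ and closed under complements and finite intersections. For a field $\mathcal{A}$ on $\Omega$, $\mathrm{pba}(\Omega,\mathcal{A})$ is the set of finitely additive nonnegative $P:\mathcal{A}\to\mathbb{R}$ with $P(\Omega)=1$; $\mathrm{ba}(\Omega,\mathcal{A})$ is the space of bounded finitely additive real set functions on $\mathcal{A}$; $B(\Omega,\mathcal{A})$ is the sup-norm closure of the linear span of indicators of sets in $\mathcal{A}$ (these functions are integrable against every element of $\mathrm{ba}(\Omega,\mathcal{A})$). $\mathrm{ba}(\Omega,\mathcal{A})$ carries the weak* topology, the weakest topology making $\mu\mapsto\int f\,d\mu$ continuous for all $f\in B(\Omega,\mathcal{A})$; $\overline{\,\cdot\,}^\ast$ denotes weak* closure. A type space is $T=((\Omega,\mathcal{A}),\{(\Omega,\mathcal{M}_i)\}_{i\in N},\{t_i\}_{i\in N})$ with $N$ a nonempty set of players, $\Omega$ a set, $\mathcal{A}$ and $\mathcal{M}_i\subseteq\mathcal{A}$ fields on $\Omega$, and $t_i:\Omega\times\mathcal{A}\to[0,1]$ with: $t_i(\omega,\cdot)\in\mathrm{pba}(\Omega,\mathcal{A})$ for all $\omega$; $t_i(\cdot,E)\in B(\Omega,\mathcal{M}_i)$ for all $E\in\mathcal{A}$; $t_i(\omega,E)=1$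 whenever $E\in\mathcal{M}_i$, $\omega\in E$. For $i\in N$ let $\Pi_i=\overline{\mathrm{conv}\{t_i(\omega,\cdot):\omega\in\Omega\}}^\ast$ (equivalently, the set of $P\in\mathrm{pba}(\Omega,\mathcal{A})$ with $P(E\cap F)=\int_F t_i(\cdot,E)\,dP$ for all $E\in\mathcal{A}$, $F\in\mathcal{M}_i$). The players' beliefs are consistent if $\bigcap_{i\in I}\Pi_i\neq\emptyset$ for every finite $I\subseteq N$. For $I\subseteq N$, a nonempty $S\subseteq\Omega$ (not necessarily in $\mathcal{A}$) is an $I$-common certainty component if there is $E\in\mathcal{A}$ with $E\subseteq S$ and $t_i(\omega,E)=1$ for all $\omega\in S$, $i\in I$. A set $E\subseteq\Omega$ is $I$-commonly certain at $\omega$ if there is an $I$-common certainty component $S$ with $\omega\in S\subseteq E$. A semi-bet is a family $(f_i)_{i\in I}\subseteq B(\Omega,\mathcal{A})$ with $I\subseteq N$ finite such that for every $\omega\in\Omega$ the set $\{\omega'\in\Omega:\int f_i\,dt_i(\omega',\cdot)\ge0\ \forall i\in I\}$ is $I$-commonly certain at $\omega$. $T$ admits a money pump if for every $P\in\mathrm{pba}(\Omega,\mathcal{A})$ there is a semi-bet $(f_i)_{i\in I}$ with $\int\sum_{i\in I}f_i\,dP<0$. *)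

theory Defs
  imports Complex_Main
begin

definition is_field :: "'w set \<Rightarrow> 'w set set \<Rightarrow> bool" where
  "is_field Omega A \<longleftrightarrow> A \<subseteq> Pow Omega \<and> Omega \<in> A \<and>
     (\<forall>E\<in>A. Omega - E \<in> A) \<and> (\<forall>E\<in>A. \<forall>F\<in>A. E \<inter> F \<in> A)"

(* finitely additive real set functions on A; set functions are normalised to be 0 off A *)
definition fin_add :: "'w set set \<Rightarrow> ('w set \<Rightarrow> real) \<Rightarrow> bool" where
  "fin_add A mu \<longleftrightarrow> (\<forall>E\<in>A. \<forall>F\<in>A. E \<inter> F = {} \<longrightarrow> mu (E \<union> F) = mu E + mu F)"

definition ba :: "'w set \<Rightarrow> 'w set set \<Rightarrow> ('w set \<Rightarrow> real) set" where
  "ba Omega A = {mu. fin_add A mu \<and> (\<exists>B. \<forall>E\<in>A. \<bar>mu E\<bar> \<le> B) \<and> (\<forall>E. E \<notin> A \<longrightarrow> mu E = 0)}"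

definition pba :: "'w set \<Rightarrow> 'w set set \<Rightarrow> ('w set \<Rightarrow> real) set" where
  "pba Omega A = {P. fin_add A P \<and> (\<forall>E\<in>A. P E \<ge> 0) \<and> P Omega = 1 \<and> (\<forall>E. E \<notin> A \<longrightarrow> P E = 0)}"

(* A-simple functions on Omega = (restrictions to Omega of) the linear span of indicators of sets in A *)
definition simple_fn :: "'w set \<Rightarrow> 'w set set \<Rightarrow> ('w \<Rightarrow> real) \<Rightarrow> bool" where
  "simple_fn Omega A s \<longleftrightarrow> finite (s ` Omega) \<and> (\<forall>c. {w\<in>Omega. s w = c} \<in> A)"

definition simple_integral :: "'w set \<Rightarrow> ('w set \<Rightarrow> real) \<Rightarrow> ('w \<Rightarrow> real) \<Rightarrow> real" where
  "simple_integral Omega mu s = (\<Sum>c\<in>s ` Omega. c * mu {w\<in>Omega. s w = c})"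

definition Bsp :: "'w set \<Rightarrow> 'w set set \<Rightarrow> ('w \<Rightarrow> real) set" where
  "Bsp Omega A = {f. \<forall>e>0. \<exists>s. simple_fn Omega A s \<and> (\<forall>w\<in>Omega. \<bar>f w - s w\<bar> < e)}"

definition integ :: "'w set \<Rightarrow> 'w set set \<Rightarrow> ('w set \<Rightarrow> real) \<Rightarrow> ('w \<Rightarrow> real) \<Rightarrow> real" where
  "integ Omega A mu f = (THE r. \<exists>s. (\<forall>n. simple_fn Omega A (s n)) \<and>
      (\<forall>n. \<forall>w\<in>Omega. \<bar>f w - s n w\<bar> \<le> 1 / real (Suc n)) \<and>
      (\<lambda>n. simple_integral Omega mu (s n)) \<longlonglongrightarrow> r)"

definition wstar_closure :: "'w set \<Rightarrow> 'w set set \<Rightarrow> ('w set \<Rightarrow> real) set \<Rightarrow> ('w set \<Rightarrow> real) set" where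
  "wstar_closure Omega A S = {mu \<in> ba Omega A. \<forall>F e. finite F \<and> F \<subseteq> Bsp Omega A \<and> e > 0 \<longrightarrow>
      (\<exists>nu\<in>S. \<forall>f\<in>F. \<bar>integ Omega A mu f - integ Omega A nu f\<bar> < e)}"

definition conv_sf :: "('w set \<Rightarrow> real) set \<Rightarrow> ('w set \<Rightarrow> real) set" where
  "conv_sf S = {mu. \<exists>(K::nat set) c m. finite K \<and> (\<forall>k\<in>K. c k \<ge> 0 \<and> m k \<in> S) \<and>
      sum c K = 1 \<and> mu = (\<lambda>E. \<Sum>k\<in>K. c k * m k E)}"

definition belief :: "'w set set \<Rightarrow> ('i \<Rightarrow> 'w \<Rightarrow> 'w set \<Rightarrow> real) \<Rightarrow> 'i \<Rightarrow> 'w \<Rightarrow> 'w set \<Rightarrow> real" where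
  "belief A t i w = (\<lambda>E. if E \<in> A then t i w E else 0)"

definition type_space :: "'i set \<Rightarrow> 'w set \<Rightarrow> 'w set set \<Rightarrow> ('i \<Rightarrow> 'w set set)
      \<Rightarrow> ('i \<Rightarrow> 'w \<Rightarrow> 'w set \<Rightarrow> real) \<Rightarrow> bool" where
  "type_space N Omega A M t \<longleftrightarrow> N \<noteq> {} \<and> is_field Omega A \<and>
     (\<forall>i\<in>N. is_field Omega (M i) \<and> M i \<subseteq> A \<and>
        (\<forall>w\<in>Omega. \<forall>E\<in>A. 0 \<le> t i w E \<and> t i w E \<le> 1) \<and>
        (\<forall>w\<in>Omega. belief A t i w \<in> pba Omega A) \<and>
        (\<forall>E\<in>A. (\<lambda>w. t i w E) \<in> Bsp Omega (M i)) \<and>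
        (\<forall>E\<in>M i. \<forall>w\<in>E. t i w E = 1))"

definition Pi_set :: "'w set \<Rightarrow> 'w set set \<Rightarrow> ('i \<Rightarrow> 'w \<Rightarrow> 'w set \<Rightarrow> real) \<Rightarrow> 'i \<Rightarrow> ('w set \<Rightarrow> real) set" where
  "Pi_set Omega A t i = wstar_closure Omega A (conv_sf (belief A t i ` Omega))"

definition consistent :: "'i set \<Rightarrow> 'w set \<Rightarrow> 'w set set \<Rightarrow> ('i \<Rightarrow> 'w \<Rightarrow> 'w set \<Rightarrow> real) \<Rightarrow> bool" where
  "consistent N Omega A t \<longleftrightarrow> (\<forall>I. finite I \<and> I \<subseteq> N \<longrightarrow> (\<Inter>i\<in>I. Pi_set Omega A t i) \<noteq> {})"

definition cc_component :: "'w set \<Rightarrow> 'w set set \<Rightarrow> ('i \<Rightarrow> 'w \<Rightarrow> 'w set \<Rightarrow> real) \<Rightarrow> 'i set \<Rightarrow> 'w set \<Rightarrow> bool" where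
  "cc_component Omega A t I S \<longleftrightarrow> S \<noteq> {} \<and> S \<subseteq> Omega \<and>
     (\<exists>E\<in>A. E \<subseteq> S \<and> (\<forall>w\<in>S. \<forall>i\<in>I. t i w E = 1))"

definition commonly_certain :: "'w set \<Rightarrow> 'w set set \<Rightarrow> ('i \<Rightarrow> 'w \<Rightarrow> 'w set \<Rightarrow> real) \<Rightarrow> 'i set \<Rightarrow> 'w set \<Rightarrow> 'w \<Rightarrow> bool" where
  "commonly_certain Omega A t I E w \<longleftrightarrow> (\<exists>S. cc_component Omega A t I S \<and> w \<in> S \<and> S \<subseteq> E)"

definition semi_bet :: "'i set \<Rightarrow> 'w set \<Rightarrow> 'w set set \<Rightarrow> ('i \<Rightarrow> 'w \<Rightarrow> 'w set \<Rightarrow> real) \<Rightarrow> 'i set \<Rightarrow> ('i \<Rightarrow> 'w \<Rightarrow> real) \<Rightarrow> bool" where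
  "semi_bet N Omega A t I f \<longleftrightarrow> finite I \<and> I \<subseteq> N \<and> (\<forall>i\<in>I. f i \<in> Bsp Omega A) \<and>
     (\<forall>w\<in>Omega. commonly_certain Omega A t I
        {w'\<in>Omega. \<forall>i\<in>I. integ Omega A (belief A t i w') (f i) \<ge> 0} w)"

definition money_pump :: "'i set \<Rightarrow> 'w set \<Rightarrow> 'w set set \<Rightarrow> ('i \<Rightarrow> 'w \<Rightarrow> 'w set \<Rightarrow> real) \<Rightarrow> bool" where
  "money_pump N Omega A t \<longleftrightarrow> (\<forall>P\<in>pba Omega A. \<exists>I f. semi_bet N Omega A t I f \<and>
     integ Omega A P (\<lambda>w. \<Sum>i\<in>I. f i w) < 0)"

end

theory Submission
  imports Defs "HOL-Analysis.Sigma_Algebra" "HOL-Analysis.Function_Topology"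
    "HOL-Analysis.Elementary_Normed_Spaces"
begin

text \<open>
  Identify finitely additive probabilities with points of the product space \<open>[0,1]\<^sup>\<A>\<close>.
  On \<open>pba\<close> the integral of a function in \<open>B(\<Omega>,\<A>)\<close> is a uniform limit of finite linear
  combinations of coordinates, so every weak* closure of a set of probabilities is closed in
  the product topology; by Tychonoff, \<open>pba\<close> and all the sets \<open>\<Pi>\<^sub>i\<close> are compact.

  If beliefs are consistent, the finite intersection property gives a common prior \<open>Q\<close> in
  every \<open>\<Pi>\<^sub>i\<close>.  A semi-bet is accepted by each player in every state, hence has nonnegative
  expectation under every belief of player \<open>i\<close> and so under \<open>Q\<close>; the total cannot have
  negative \<open>Q\<close>-expectation.

  If the \<open>\<Pi>\<^sub>i\<close>, \<open>i \<in> I\<close>, have empty intersection, compactness of the product of the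
  \<open>\<Pi>\<^sub>i\<close> yields finitely many events on which no profile of priors is unanimous.  A
  profile minimising the dispersion \<open>\<Sum>\<^sub>E \<Sum>\<^sub>i (Q\<^sub>i E - mean)\<^sup>2\<close> over this compact convex set
  gives, by its first-order condition, weights \<open>a\<^sub>i(E)\<close> with \<open>\<Sum>\<^sub>i a\<^sub>i(E) = 0\<close> that are strictly
  positive on every profile.  Selling player \<open>i\<close> the bet \<open>\<Sum>\<^sub>E a\<^sub>i(E) 1\<^sub>E\<close> at its least
  expectation over \<open>\<Pi>\<^sub>i\<close> is acceptable to \<open>i\<close> in every state, while the bets add up to a
  negative constant: a money pump.
\<close>

section \<open>Simple functions and their integrals\<close>

lemma is_field_iff_algebra: "is_field \<Omega> M \<longleftrightarrow> algebra \<Omega> M"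
  unfolding is_field_def algebra_iff_Int by (metis Diff_cancel Diff_empty)

context algebra
begin

lemma fin_add_empty: "fin_add M \<mu> \<Longrightarrow> \<mu> {} = 0"
  unfolding fin_add_def by (metis Int_empty_left Un_empty add_cancel_right_right empty_sets)

lemma fin_add_UN:
  assumes "fin_add M \<mu>" "finite J" "\<And>j. j \<in> J \<Longrightarrow> h j \<in> M" "disjoint_family_on h J"
  shows "\<mu> (\<Union>j\<in>J. h j) = (\<Sum>j\<in>J. \<mu> (h j))"
  using assms(2-4)
proof (induction J rule: finite_induct)
  case empty
  then show ?case using fin_add_empty[OF assms(1)] by simp
next
  case (insert j J)
  then have "h j \<inter> (\<Union>k\<in>J. h k) = {}" "disjoint_family_on h J"
    by (simp_all add: disjoint_family_on_insert)
  moreover have "(\<Union>k\<in>J. h k) \<in> M" using insert by blast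
  ultimately show ?case
    using assms(1) insert unfolding fin_add_def by simp
qed

lemma pba_fin_add: "P \<in> pba \<Omega> M \<Longrightarrow> fin_add M P"
  unfolding pba_def by blast

lemma pba_space: "P \<in> pba \<Omega> M \<Longrightarrow> P \<Omega> = 1"
  unfolding pba_def by blast

lemma pba_range:
  assumes P: "P \<in> pba \<Omega> M" and E: "E \<in> M"
  shows "0 \<le> P E" "P E \<le> 1"
proof -
  have "P (E \<union> (\<Omega> - E)) = P E + P (\<Omega> - E)"
    using P E compl_sets[OF E] unfolding pba_def fin_add_def by blast
  moreover have "E \<union> (\<Omega> - E) = \<Omega>" using sets_into_space[OF E] by blast
  ultimately show "0 \<le> P E" "P E \<le> 1"
    using P E compl_sets[OF E] unfolding pba_def by auto
qed

lemma pba_abs_le_1: "P \<in> pba \<Omega> M \<Longrightarrow> E \<in> M \<Longrightarrow> \<bar>P E\<bar> \<le> 1"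
  using pba_range by fastforce

lemma pba_subset_ba: "pba \<Omega> M \<subseteq> ba \<Omega> M"
proof
  fix P assume P: "P \<in> pba \<Omega> M"
  then have "\<forall>E\<in>M. \<bar>P E\<bar> \<le> 1" using pba_abs_le_1 by blast
  with P show "P \<in> ba \<Omega> M" unfolding ba_def pba_def by blast
qed

lemma simple_fnD:
  "simple_fn \<Omega> M s \<Longrightarrow> finite (s ` \<Omega>)"
  "simple_fn \<Omega> M s \<Longrightarrow> {w\<in>\<Omega>. s w = c} \<in> M"
  unfolding simple_fn_def by blast+

lemma simple_fn_comp:
  assumes fin: "finite (p ` \<Omega>)" and lev: "\<And>y. {w\<in>\<Omega>. p w = y} \<in> M"
  shows "simple_fn \<Omega> M (\<lambda>w. \<phi> (p w))"
  unfolding simple_fn_def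
proof
  show "finite ((\<lambda>w. \<phi> (p w)) ` \<Omega>)"
    using fin by (simp add: image_image[symmetric])
  show "\<forall>c. {w \<in> \<Omega>. \<phi> (p w) = c} \<in> M"
  proof
    fix c
    have "{w \<in> \<Omega>. \<phi> (p w) = c} = (\<Union>y\<in>{y\<in>p ` \<Omega>. \<phi> y = c}. {w\<in>\<Omega>. p w = y})"
      by (auto simp: image_iff)
    also have "\<dots> \<in> M" using fin lev by auto
    finally show "{w \<in> \<Omega>. \<phi> (p w) = c} \<in> M" .
  qed
qed

lemma simple_fn_pairD:
  assumes "simple_fn \<Omega> M s" "simple_fn \<Omega> M s'"
  shows "finite ((\<lambda>w. (s w, s' w)) ` \<Omega>)" "{w\<in>\<Omega>. (s w, s' w) = y} \<in> M"
proof -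
  show "finite ((\<lambda>w. (s w, s' w)) ` \<Omega>)"
    by (rule finite_subset[of _ "s ` \<Omega> \<times> s' ` \<Omega>"]) (use assms in \<open>auto dest: simple_fnD\<close>)
  have "{w\<in>\<Omega>. (s w, s' w) = y} = {w\<in>\<Omega>. s w = fst y} \<inter> {w\<in>\<Omega>. s' w = snd y}"
    by (cases y) auto
  then show "{w\<in>\<Omega>. (s w, s' w) = y} \<in> M" using assms by (auto dest: simple_fnD)
qed

lemma simple_fn_compose2:
  assumes "simple_fn \<Omega> M s" "simple_fn \<Omega> M s'"
  shows "simple_fn \<Omega> M (\<lambda>w. \<phi> (s w) (s' w))"
  using simple_fn_comp[OF simple_fn_pairD[OF assms], of "case_prod \<phi>"] by simp

lemma simple_fn_const: "simple_fn \<Omega> M (\<lambda>w. c)"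
proof -
  have "{w\<in>\<Omega>. c = d} \<in> M" for d by (cases "c = d") auto
  moreover have "finite ((\<lambda>w. c) ` \<Omega>)" by (rule finite_subset[of _ "{c}"]) auto
  ultimately show ?thesis unfolding simple_fn_def by blast
qed

lemma simple_fn_add:
  "simple_fn \<Omega> M s \<Longrightarrow> simple_fn \<Omega> M s' \<Longrightarrow> simple_fn \<Omega> M (\<lambda>w. s w + s' w)"
  using simple_fn_compose2[of s s' "(+)"] by simp

lemma indicator_level_sets:
  assumes "E \<in> M" shows "{w\<in>\<Omega>. (w \<in> E) = b} = (if b then E else \<Omega> - E)" "{w\<in>\<Omega>. (w \<in> E) = b} \<in> M"
proof -
  show "{w\<in>\<Omega>. (w \<in> E) = b} = (if b then E else \<Omega> - E)"
    using sets_into_space[OF assms] by auto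
  then show "{w\<in>\<Omega>. (w \<in> E) = b} \<in> M" using assms by auto
qed

lemma simple_fn_cmult: "simple_fn \<Omega> M s \<Longrightarrow> simple_fn \<Omega> M (\<lambda>w. a * s w)"
  using simple_fn_compose2[of s s "\<lambda>x _. a * x"] by simp

lemma simple_fn_indicator:
  assumes "E \<in> M" shows "simple_fn \<Omega> M (indicator E :: 'a \<Rightarrow> real)"
proof -
  have "simple_fn \<Omega> M (\<lambda>w. of_bool (w \<in> E) :: real)"
    using indicator_level_sets(2)[OF assms] by (intro simple_fn_comp) (simp_all add: finite_subset[OF subset_UNIV])
  moreover have "indicator E = (\<lambda>w. of_bool (w \<in> E) :: real)"
    by (simp add: fun_eq_iff indicator_def)
  ultimately show ?thesis by simp
qed

lemma simple_fn_sum: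
  "finite K \<Longrightarrow> (\<And>k. k \<in> K \<Longrightarrow> simple_fn \<Omega> M (s k)) \<Longrightarrow> simple_fn \<Omega> M (\<lambda>w. \<Sum>k\<in>K. s k w)"
  by (induction K rule: finite_induct) (simp_all add: simple_fn_const simple_fn_add)

lemma simple_integral_partition:
  assumes fa: "fin_add M \<mu>" and Y: "finite Y" "p ` \<Omega> \<subseteq> Y"
    and lev: "\<And>y. {w\<in>\<Omega>. p w = y} \<in> M"
    and s: "\<And>w. w \<in> \<Omega> \<Longrightarrow> s w = \<phi> (p w)"
  shows "simple_integral \<Omega> \<mu> s = (\<Sum>y\<in>Y. \<phi> y * \<mu> {w\<in>\<Omega>. p w = y})"
proof -
  define Y' where "Y' = {y\<in>Y. \<phi> y \<in> s ` \<Omega>}"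
  have fY': "finite Y'" using Y unfolding Y'_def by simp
  have fs: "finite (s ` \<Omega>)"
    by (rule finite_subset[of _ "\<phi> ` Y"]) (use Y s in force)+
  have lev_s: "{w\<in>\<Omega>. s w = c} = (\<Union>y\<in>{y\<in>Y'. \<phi> y = c}. {w\<in>\<Omega>. p w = y})" if "c \<in> s ` \<Omega>" for c
    using s Y that unfolding Y'_def by force
  have "simple_integral \<Omega> \<mu> s = (\<Sum>c\<in>s ` \<Omega>. \<Sum>y\<in>{y\<in>Y'. \<phi> y = c}. \<phi> y * \<mu> {w\<in>\<Omega>. p w = y})"
    unfolding simple_integral_def
  proof (rule sum.cong[OF refl])
    fix c assume c: "c \<in> s ` \<Omega>"
    have "\<mu> {w\<in>\<Omega>. s w = c} = (\<Sum>y\<in>{y\<in>Y'. \<phi> y = c}. \<mu> {w\<in>\<Omega>. p w = y})"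
      unfolding lev_s[OF c]
      by (rule fin_add_UN[OF fa]) (use fY' lev in \<open>auto simp: disjoint_family_on_def\<close>)
    then show "c * \<mu> {w\<in>\<Omega>. s w = c} = (\<Sum>y\<in>{y\<in>Y'. \<phi> y = c}. \<phi> y * \<mu> {w\<in>\<Omega>. p w = y})"
      by (simp add: sum_distrib_left)
  qed
  also have "\<dots> = (\<Sum>y\<in>Y'. \<phi> y * \<mu> {w\<in>\<Omega>. p w = y})"
    by (rule sum.group[OF fY' fs]) (auto simp: Y'_def)
  also have "\<dots> = (\<Sum>y\<in>Y. \<phi> y * \<mu> {w\<in>\<Omega>. p w = y})"
  proof (rule sum.mono_neutral_left[OF Y(1)])
    show "\<forall>y\<in>Y - Y'. \<phi> y * \<mu> {w \<in> \<Omega>. p w = y} = 0"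
    proof
      fix y assume "y \<in> Y - Y'"
      then have "{w \<in> \<Omega>. p w = y} = {}" using s unfolding Y'_def by force
      then show "\<phi> y * \<mu> {w \<in> \<Omega>. p w = y} = 0"
        by (simp only: fin_add_empty[OF fa] mult_zero_right)
    qed
  qed (auto simp: Y'_def)
  finally show ?thesis .
qed

lemma simple_integral_lincomb:
  assumes fa: "fin_add M \<mu>" and s: "simple_fn \<Omega> M s" "simple_fn \<Omega> M s'"
  shows "simple_integral \<Omega> \<mu> (\<lambda>w. a * s w + b * s' w)
    = a * simple_integral \<Omega> \<mu> s + b * simple_integral \<Omega> \<mu> s'"
proof -
  let ?p = "\<lambda>w. (s w, s' w)"
  have SI: "simple_integral \<Omega> \<mu> (\<lambda>w. \<phi> (?p w)) = (\<Sum>y\<in>?p ` \<Omega>. \<phi> y * \<mu> {w\<in>\<Omega>. ?p w = y})"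
    for \<phi> by (rule simple_integral_partition[OF fa]) (simp_all add: simple_fn_pairD[OF s])
  show ?thesis
    using SI[of "\<lambda>y. a * fst y + b * snd y"] SI[of fst] SI[of snd]
    by (simp add: sum_distrib_left distrib_right sum.distrib mult.assoc)
qed

lemma simple_integral_add:
  "fin_add M \<mu> \<Longrightarrow> simple_fn \<Omega> M s \<Longrightarrow> simple_fn \<Omega> M s' \<Longrightarrow>
    simple_integral \<Omega> \<mu> (\<lambda>w. s w + s' w) = simple_integral \<Omega> \<mu> s + simple_integral \<Omega> \<mu> s'"
  using simple_integral_lincomb[of \<mu> s s' 1 1] by simp

lemma simple_integral_diff:
  "fin_add M \<mu> \<Longrightarrow> simple_fn \<Omega> M s \<Longrightarrow> simple_fn \<Omega> M s' \<Longrightarrow>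
    simple_integral \<Omega> \<mu> (\<lambda>w. s w - s' w) = simple_integral \<Omega> \<mu> s - simple_integral \<Omega> \<mu> s'"
  using simple_integral_lincomb[of \<mu> s s' 1 "-1"] by simp

lemma simple_integral_cmult:
  "fin_add M \<mu> \<Longrightarrow> simple_fn \<Omega> M s \<Longrightarrow>
    simple_integral \<Omega> \<mu> (\<lambda>w. a * s w) = a * simple_integral \<Omega> \<mu> s"
  using simple_integral_lincomb[of \<mu> s s a 0] by simp

lemma simple_integral_const:
  assumes "fin_add M \<mu>" shows "simple_integral \<Omega> \<mu> (\<lambda>w. c) = c * \<mu> \<Omega>"
proof (cases "\<Omega> = {}")
  case False
  then have "(\<lambda>w. c) ` \<Omega> = {c}" by auto
  then show ?thesis by (simp add: simple_integral_def)
qed (simp add: simple_integral_def fin_add_empty[OF assms])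

lemma simple_integral_indicator:
  assumes fa: "fin_add M \<mu>" and E: "E \<in> M"
  shows "simple_integral \<Omega> \<mu> (indicator E) = \<mu> E"
proof -
  have "simple_integral \<Omega> \<mu> (indicator E) = (\<Sum>b\<in>UNIV. of_bool b * \<mu> {w\<in>\<Omega>. (w \<in> E) = b})"
    using indicator_level_sets(2)[OF E] by (intro simple_integral_partition[OF fa]) auto
  also have "\<dots> = \<mu> E" using indicator_level_sets(1)[OF E] by (simp add: UNIV_bool)
  finally show ?thesis .
qed

lemma simple_integral_sum:
  assumes fa: "fin_add M \<mu>"
  shows "finite K \<Longrightarrow> (\<And>k. k \<in> K \<Longrightarrow> simple_fn \<Omega> M (s k)) \<Longrightarrow>
    simple_integral \<Omega> \<mu> (\<lambda>w. \<Sum>k\<in>K. s k w) = (\<Sum>k\<in>K. simple_integral \<Omega> \<mu> (s k))"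
  by (induction K rule: finite_induct)
     (simp_all add: simple_integral_const[OF fa] simple_integral_add[OF fa] simple_fn_sum)

lemma sum_abs_measure_le:
  assumes fa: "fin_add M \<mu>" and B: "\<And>E. E \<in> M \<Longrightarrow> \<bar>\<mu> E\<bar> \<le> B"
    and C: "finite C" "\<And>c. c \<in> C \<Longrightarrow> L c \<in> M" "disjoint_family_on L C"
  shows "(\<Sum>c\<in>C. \<bar>\<mu> (L c)\<bar>) \<le> 2 * B"
proof -
  have part: "\<bar>\<Sum>c\<in>D. \<mu> (L c)\<bar> \<le> B" if "D \<subseteq> C" for D
  proof -
    have "finite D" "disjoint_family_on L D"
      using C that by (auto intro: rev_finite_subset disjoint_family_on_mono)
    then have "(\<Sum>c\<in>D. \<mu> (L c)) = \<mu> (\<Union>c\<in>D. L c)"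
      using C that by (intro fin_add_UN[OF fa, symmetric]) auto
    moreover have "(\<Union>c\<in>D. L c) \<in> M" using \<open>finite D\<close> C that by blast
    ultimately show ?thesis using B by simp
  qed
  define Pos where "Pos = {c\<in>C. 0 \<le> \<mu> (L c)}"
  have "(\<Sum>c\<in>C. \<bar>\<mu> (L c)\<bar>) = (\<Sum>c\<in>C - Pos. \<bar>\<mu> (L c)\<bar>) + (\<Sum>c\<in>Pos. \<bar>\<mu> (L c)\<bar>)"
    using C(1) by (intro sum.subset_diff) (auto simp: Pos_def)
  also have "\<dots> = - (\<Sum>c\<in>C - Pos. \<mu> (L c)) + (\<Sum>c\<in>Pos. \<mu> (L c))"
    unfolding sum_negf[symmetric] by (intro arg_cong2[where f = "(+)"] sum.cong) (auto simp: Pos_def)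
  also have "\<dots> \<le> 2 * B"
    using part[of "C - Pos"] part[of Pos] by (auto simp: Pos_def)
  finally show ?thesis .
qed

lemma simple_integral_abs_le:
  assumes fa: "fin_add M \<mu>" and B: "\<And>E. E \<in> M \<Longrightarrow> \<bar>\<mu> E\<bar> \<le> B"
    and s: "simple_fn \<Omega> M s" and r: "\<And>w. w \<in> \<Omega> \<Longrightarrow> \<bar>s w\<bar> \<le> r" "0 \<le> r"
  shows "\<bar>simple_integral \<Omega> \<mu> s\<bar> \<le> 2 * B * r"
proof -
  have "\<bar>simple_integral \<Omega> \<mu> s\<bar> \<le> (\<Sum>c\<in>s ` \<Omega>. \<bar>c\<bar> * \<bar>\<mu> {w\<in>\<Omega>. s w = c}\<bar>)"
    unfolding simple_integral_def abs_mult[symmetric] by (rule sum_abs)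
  also have "\<dots> \<le> (\<Sum>c\<in>s ` \<Omega>. r * \<bar>\<mu> {w\<in>\<Omega>. s w = c}\<bar>)"
    using r by (intro sum_mono mult_right_mono) auto
  also have "\<dots> = r * (\<Sum>c\<in>s ` \<Omega>. \<bar>\<mu> {w\<in>\<Omega>. s w = c}\<bar>)"
    by (simp add: sum_distrib_left)
  also have "\<dots> \<le> r * (2 * B)"
    using r(2) s
    by (intro mult_left_mono sum_abs_measure_le[OF fa B])
       (auto simp: simple_fnD disjoint_family_on_def)
  finally show ?thesis by (simp add: algebra_simps)
qed

lemma simple_integral_close:
  assumes fa: "fin_add M \<mu>" and B: "\<And>E. E \<in> M \<Longrightarrow> \<bar>\<mu> E\<bar> \<le> B"
    and s: "simple_fn \<Omega> M s" "simple_fn \<Omega> M s'"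
    and a: "\<And>w. w \<in> \<Omega> \<Longrightarrow> \<bar>f w - s w\<bar> \<le> a" and b: "\<And>w. w \<in> \<Omega> \<Longrightarrow> \<bar>f w - s' w\<bar> \<le> b"
    and ab: "0 \<le> a" "0 \<le> b"
  shows "\<bar>simple_integral \<Omega> \<mu> s - simple_integral \<Omega> \<mu> s'\<bar> \<le> 2 * B * (a + b)"
proof -
  have "\<bar>s w - s' w\<bar> \<le> a + b" if "w \<in> \<Omega>" for w
    using a[OF that] b[OF that] by linarith
  then have "\<bar>simple_integral \<Omega> \<mu> (\<lambda>w. s w - s' w)\<bar> \<le> 2 * B * (a + b)"
    using ab s by (intro simple_integral_abs_le[OF fa B]) (auto intro: simple_fn_compose2)
  then show ?thesis using simple_integral_diff[OF fa s] by simp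
qed

end

section \<open>The integral on \<open>B(\<Omega>, \<A>)\<close>\<close>

definition simple_approx_seq :: "'w set \<Rightarrow> 'w set set \<Rightarrow> ('w \<Rightarrow> real) \<Rightarrow> (nat \<Rightarrow> 'w \<Rightarrow> real) \<Rightarrow> bool"
  where "simple_approx_seq \<Omega> M f s \<longleftrightarrow>
    (\<forall>n. simple_fn \<Omega> M (s n)) \<and> (\<forall>n. \<forall>w\<in>\<Omega>. \<bar>f w - s n w\<bar> \<le> 1 / real (Suc n))"

lemma integ_eq_The:
  "integ \<Omega> M \<mu> f = (THE r. \<exists>s. simple_approx_seq \<Omega> M f s \<and> (\<lambda>n. simple_integral \<Omega> \<mu> (s n)) \<longlonglongrightarrow> r)"
  by (simp add: integ_def simple_approx_seq_def conj_assoc)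

lemma Cauchy_if_dist_le:
  fixes a :: "nat \<Rightarrow> real"
  assumes "\<And>m n. \<bar>a m - a n\<bar> \<le> \<delta> m + \<delta> n" "\<delta> \<longlonglongrightarrow> 0"
  shows "Cauchy a"
proof (rule metric_CauchyI)
  fix e :: real assume "0 < e"
  then have "\<forall>\<^sub>F n in sequentially. \<delta> n < e / 2"
    by (intro order_tendstoD(2)[OF assms(2)]) simp
  then obtain N where N: "\<And>n. n \<ge> N \<Longrightarrow> \<delta> n < e / 2"
    unfolding eventually_sequentially by blast
  show "\<exists>N. \<forall>m\<ge>N. \<forall>n\<ge>N. dist (a m) (a n) < e"
  proof (intro exI allI impI)
    fix m n assume "N \<le> m" "N \<le> n"
    then have "\<delta> m < e / 2" "\<delta> n < e / 2" using N by auto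
    then show "dist (a m) (a n) < e" using assms(1)[of m n] unfolding dist_real_def by linarith
  qed
qed

context algebra
begin

lemma simple_fn_in_Bsp: "simple_fn \<Omega> M s \<Longrightarrow> s \<in> Bsp \<Omega> M"
  unfolding Bsp_def by (auto intro!: exI[of _ s])

lemma BspE:
  assumes "f \<in> Bsp \<Omega> M" "0 < e"
  obtains s where "simple_fn \<Omega> M s" "\<And>w. w \<in> \<Omega> \<Longrightarrow> \<bar>f w - s w\<bar> < e"
  using assms unfolding Bsp_def by blast

lemma Bsp_simple_approx_family:
  assumes "F \<subseteq> Bsp \<Omega> M" "0 < e"
  obtains sg where "\<And>g. g \<in> F \<Longrightarrow> simple_fn \<Omega> M (sg g)"
    "\<And>g w. g \<in> F \<Longrightarrow> w \<in> \<Omega> \<Longrightarrow> \<bar>g w - sg g w\<bar> \<le> e"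
proof -
  have "\<exists>s. simple_fn \<Omega> M s \<and> (\<forall>w\<in>\<Omega>. \<bar>g w - s w\<bar> \<le> e)" if g: "g \<in> F" for g
  proof -
    obtain s where "simple_fn \<Omega> M s" "\<And>w. w \<in> \<Omega> \<Longrightarrow> \<bar>g w - s w\<bar> < e"
      using BspE[of g e] g assms by blast
    then show ?thesis using less_imp_le by blast
  qed
  then show ?thesis using that by metis
qed

lemma Bsp_simple_approx_seq:
  assumes "f \<in> Bsp \<Omega> M" obtains s where "simple_approx_seq \<Omega> M f s"
proof -
  have "\<forall>n. \<exists>s. simple_fn \<Omega> M s \<and> (\<forall>w\<in>\<Omega>. \<bar>f w - s w\<bar> < 1 / real (Suc n))"
    using assms unfolding Bsp_def by simp
  then obtain s where "\<forall>n. simple_fn \<Omega> M (s n) \<and> (\<forall>w\<in>\<Omega>. \<bar>f w - s n w\<bar> < 1 / real (Suc n))"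
    by metis
  then have "simple_approx_seq \<Omega> M f s" unfolding simple_approx_seq_def by (meson less_imp_le)
  then show ?thesis by (rule that)
qed

lemma Bsp_add:
  assumes "f \<in> Bsp \<Omega> M" "g \<in> Bsp \<Omega> M"
  shows "(\<lambda>w. f w + g w) \<in> Bsp \<Omega> M"
  unfolding Bsp_def
proof (intro CollectI allI impI)
  fix e :: real assume "0 < e"
  then obtain s s' where s: "simple_fn \<Omega> M s" "\<And>w. w \<in> \<Omega> \<Longrightarrow> \<bar>f w - s w\<bar> < e / 2"
    and s': "simple_fn \<Omega> M s'" "\<And>w. w \<in> \<Omega> \<Longrightarrow> \<bar>g w - s' w\<bar> < e / 2"
    using BspE[OF assms(1)] BspE[OF assms(2)] half_gt_zero by metis
  have "\<bar>f w + g w - (s w + s' w)\<bar> < e" if "w \<in> \<Omega>" for w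
    using s(2)[OF that] s'(2)[OF that] by linarith
  then show "\<exists>s. simple_fn \<Omega> M s \<and> (\<forall>w\<in>\<Omega>. \<bar>f w + g w - s w\<bar> < e)"
    using simple_fn_add[OF s(1) s'(1)] by blast
qed

lemma Bsp_sum:
  "finite I \<Longrightarrow> (\<And>i. i \<in> I \<Longrightarrow> f i \<in> Bsp \<Omega> M) \<Longrightarrow> (\<lambda>w. \<Sum>i\<in>I. f i w) \<in> Bsp \<Omega> M"
  by (induction I rule: finite_induct) (simp_all add: simple_fn_in_Bsp simple_fn_const Bsp_add)

lemma integ_limit:
  assumes fa: "fin_add M \<mu>" and B: "\<And>E. E \<in> M \<Longrightarrow> \<bar>\<mu> E\<bar> \<le> B"
    and s: "simple_approx_seq \<Omega> M f s"
  shows "(\<lambda>n. simple_integral \<Omega> \<mu> (s n)) \<longlonglongrightarrow> integ \<Omega> M \<mu> f"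
proof -
  define \<delta> where "\<delta> n = 2 * B * (1 / real (Suc n))" for n
  have \<delta>: "\<delta> \<longlonglongrightarrow> 0"
    unfolding \<delta>_def by (intro tendsto_mult_right_zero LIMSEQ_Suc[OF lim_1_over_n])
  have close: "\<bar>simple_integral \<Omega> \<mu> (s' m) - simple_integral \<Omega> \<mu> (s n)\<bar> \<le> \<delta> m + \<delta> n"
    if "simple_approx_seq \<Omega> M f s'" for s' m n
  proof -
    have "\<bar>simple_integral \<Omega> \<mu> (s' m) - simple_integral \<Omega> \<mu> (s n)\<bar>
        \<le> 2 * B * (1 / real (Suc m) + 1 / real (Suc n))"
      using that s unfolding simple_approx_seq_def by (intro simple_integral_close[OF fa B]) auto
    then show ?thesis unfolding \<delta>_def by (simp add: algebra_simps)
  qed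
  have "Cauchy (\<lambda>n. simple_integral \<Omega> \<mu> (s n))"
    using close[OF s] \<delta> by (rule Cauchy_if_dist_le)
  then obtain L where L: "(\<lambda>n. simple_integral \<Omega> \<mu> (s n)) \<longlonglongrightarrow> L"
    by (auto simp: Cauchy_convergent_iff convergent_def)
  have "r = L" if "simple_approx_seq \<Omega> M f s'" "(\<lambda>n. simple_integral \<Omega> \<mu> (s' n)) \<longlonglongrightarrow> r"
    for s' r
  proof -
    have "(\<lambda>n. simple_integral \<Omega> \<mu> (s' n) - simple_integral \<Omega> \<mu> (s n)) \<longlonglongrightarrow> 0"
    proof (rule Lim_null_comparison)
      show "\<forall>\<^sub>F n in sequentially.
          norm (simple_integral \<Omega> \<mu> (s' n) - simple_integral \<Omega> \<mu> (s n)) \<le> \<delta> n + \<delta> n"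
        using close[OF that(1)] by (intro always_eventually allI) (metis real_norm_def)
      show "(\<lambda>n. \<delta> n + \<delta> n) \<longlonglongrightarrow> 0" using tendsto_add[OF \<delta> \<delta>] by simp
    qed
    moreover have "(\<lambda>n. simple_integral \<Omega> \<mu> (s' n) - simple_integral \<Omega> \<mu> (s n)) \<longlonglongrightarrow> r - L"
      using that(2) L by (rule tendsto_diff)
    ultimately show "r = L" using LIMSEQ_unique by fastforce
  qed
  then have "integ \<Omega> M \<mu> f = L"
    unfolding integ_eq_The using s L by (intro the_equality) blast+
  with L show ?thesis by simp
qed

lemma integ_approx:
  assumes fa: "fin_add M \<mu>" and B: "\<And>E. E \<in> M \<Longrightarrow> \<bar>\<mu> E\<bar> \<le> B"
    and f: "f \<in> Bsp \<Omega> M" and s: "simple_fn \<Omega> M s"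
    and e: "\<And>w. w \<in> \<Omega> \<Longrightarrow> \<bar>f w - s w\<bar> \<le> e" "0 \<le> e"
  shows "\<bar>integ \<Omega> M \<mu> f - simple_integral \<Omega> \<mu> s\<bar> \<le> 2 * B * e"
proof -
  obtain sq where sq: "simple_approx_seq \<Omega> M f sq" using f by (rule Bsp_simple_approx_seq)
  have "(\<lambda>n. \<bar>simple_integral \<Omega> \<mu> (sq n) - simple_integral \<Omega> \<mu> s\<bar>)
      \<longlonglongrightarrow> \<bar>integ \<Omega> M \<mu> f - simple_integral \<Omega> \<mu> s\<bar>"
    by (intro tendsto_intros integ_limit[OF fa B sq])
  moreover have "(\<lambda>n. 2 * B * (1 / real (Suc n) + e)) \<longlonglongrightarrow> 2 * B * (0 + e)"
    by (intro tendsto_intros LIMSEQ_Suc[OF lim_1_over_n])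
  moreover have "\<bar>simple_integral \<Omega> \<mu> (sq n) - simple_integral \<Omega> \<mu> s\<bar> \<le> 2 * B * (1 / real (Suc n) + e)"
    for n using sq e s by (intro simple_integral_close[OF fa B]) (auto simp: simple_approx_seq_def)
  ultimately have "\<bar>integ \<Omega> M \<mu> f - simple_integral \<Omega> \<mu> s\<bar> \<le> 2 * B * (0 + e)"
    by (intro LIMSEQ_le) blast+
  then show ?thesis by simp
qed

lemma integ_tendsto:
  assumes fa: "fin_add M \<mu>" and B: "\<And>E. E \<in> M \<Longrightarrow> \<bar>\<mu> E\<bar> \<le> B"
    and f: "f \<in> Bsp \<Omega> M" and s: "\<And>n. simple_fn \<Omega> M (s n)"
    and e: "\<And>n w. w \<in> \<Omega> \<Longrightarrow> \<bar>f w - s n w\<bar> \<le> e n" "\<And>n. 0 \<le> e n" "e \<longlonglongrightarrow> 0"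
  shows "(\<lambda>n. simple_integral \<Omega> \<mu> (s n)) \<longlonglongrightarrow> integ \<Omega> M \<mu> f"
proof -
  have "(\<lambda>n. simple_integral \<Omega> \<mu> (s n) - integ \<Omega> M \<mu> f) \<longlonglongrightarrow> 0"
  proof (rule Lim_null_comparison)
    show "\<forall>\<^sub>F n in sequentially. norm (simple_integral \<Omega> \<mu> (s n) - integ \<Omega> M \<mu> f) \<le> 2 * B * e n"
      using integ_approx[OF fa B f s e(1) e(2)] by (simp add: abs_minus_commute)
    show "(\<lambda>n. 2 * B * e n) \<longlonglongrightarrow> 0" by (rule tendsto_mult_right_zero[OF e(3)])
  qed
  then show ?thesis by (simp add: LIM_zero_iff)
qed

lemma integ_simple:
  "fin_add M \<mu> \<Longrightarrow> (\<And>E. E \<in> M \<Longrightarrow> \<bar>\<mu> E\<bar> \<le> B) \<Longrightarrow> simple_fn \<Omega> M s \<Longrightarrow>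
    integ \<Omega> M \<mu> s = simple_integral \<Omega> \<mu> s"
  using integ_approx[of \<mu> B s s 0] simple_fn_in_Bsp by simp

lemma integ_add:
  assumes fa: "fin_add M \<mu>" and B: "\<And>E. E \<in> M \<Longrightarrow> \<bar>\<mu> E\<bar> \<le> B"
    and f: "f \<in> Bsp \<Omega> M" and g: "g \<in> Bsp \<Omega> M"
  shows "integ \<Omega> M \<mu> (\<lambda>w. f w + g w) = integ \<Omega> M \<mu> f + integ \<Omega> M \<mu> g"
proof -
  obtain s s' where s: "simple_approx_seq \<Omega> M f s" and s': "simple_approx_seq \<Omega> M g s'"
    using Bsp_simple_approx_seq f g by metis
  have "(\<lambda>n. simple_integral \<Omega> \<mu> (\<lambda>w. s n w + s' n w)) \<longlonglongrightarrow> integ \<Omega> M \<mu> (\<lambda>w. f w + g w)"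
  proof (rule integ_tendsto[OF fa B Bsp_add[OF f g]])
    show "(\<lambda>n. 2 * (1 / real (Suc n))) \<longlonglongrightarrow> 0"
      by (intro tendsto_mult_right_zero LIMSEQ_Suc[OF lim_1_over_n])
    show "\<bar>f w + g w - (s n w + s' n w)\<bar> \<le> 2 * (1 / real (Suc n))" if "w \<in> \<Omega>" for n w
    proof -
      have "\<bar>f w - s n w\<bar> \<le> 1 / real (Suc n)" "\<bar>g w - s' n w\<bar> \<le> 1 / real (Suc n)"
        using s s' that unfolding simple_approx_seq_def by blast+
      then show ?thesis by linarith
    qed
  qed (use s s' in \<open>auto simp: simple_approx_seq_def intro: simple_fn_add\<close>)
  moreover have "(\<lambda>n. simple_integral \<Omega> \<mu> (\<lambda>w. s n w + s' n w)) \<longlonglongrightarrow> integ \<Omega> M \<mu> f + integ \<Omega> M \<mu> g"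
    using tendsto_add[OF integ_limit[OF fa B s] integ_limit[OF fa B s']] s s'
    by (simp add: simple_integral_add[OF fa] simple_approx_seq_def)
  ultimately show ?thesis by (rule LIMSEQ_unique)
qed

lemma integ_sum:
  assumes fa: "fin_add M \<mu>" and B: "\<And>E. E \<in> M \<Longrightarrow> \<bar>\<mu> E\<bar> \<le> B"
  shows "finite I \<Longrightarrow> (\<And>i. i \<in> I \<Longrightarrow> f i \<in> Bsp \<Omega> M) \<Longrightarrow>
    integ \<Omega> M \<mu> (\<lambda>w. \<Sum>i\<in>I. f i w) = (\<Sum>i\<in>I. integ \<Omega> M \<mu> (f i))"
proof (induction I rule: finite_induct)
  case empty
  then show ?case
    using integ_simple[OF fa B simple_fn_const] simple_integral_const[OF fa, of 0] by simp
next
  case (insert i I)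
  then show ?case by (simp add: integ_add[OF fa B] Bsp_sum)
qed

lemma integ_indicator:
  assumes "\<mu> \<in> ba \<Omega> M" "E \<in> M"
  shows "integ \<Omega> M \<mu> (indicator E) = \<mu> E"
proof -
  obtain B where "fin_add M \<mu>" "\<And>E. E \<in> M \<Longrightarrow> \<bar>\<mu> E\<bar> \<le> B" using assms(1) unfolding ba_def by blast
  then show ?thesis
    using integ_simple simple_fn_indicator[OF assms(2)] simple_integral_indicator[OF _ assms(2)] by metis
qed

lemma simple_fn_indicator_combination:
  assumes "finite EE" "EE \<subseteq> M"
  shows "simple_fn \<Omega> M (\<lambda>w. (\<Sum>E\<in>EE. a E * indicator E w) - c)"
proof -
  have "simple_fn \<Omega> M (\<lambda>w. \<Sum>E\<in>EE. a E * indicator E w)"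
    using assms by (intro simple_fn_sum simple_fn_cmult simple_fn_indicator) auto
  then show ?thesis using simple_fn_compose2[OF _ simple_fn_const, of _ "(-)" c] by simp
qed

lemma integ_indicator_combination:
  assumes P: "P \<in> pba \<Omega> M" and EE: "finite EE" "EE \<subseteq> M"
  shows "integ \<Omega> M P (\<lambda>w. (\<Sum>E\<in>EE. a E * indicator E w) - c) = (\<Sum>E\<in>EE. a E * P E) - c"
proof -
  have fa: "fin_add M P" by (rule pba_fin_add[OF P])
  have ind: "simple_fn \<Omega> M (\<lambda>w. a E * indicator E w)" if "E \<in> EE" for E
    using that EE by (intro simple_fn_cmult simple_fn_indicator) auto
  have "integ \<Omega> M P (\<lambda>w. (\<Sum>E\<in>EE. a E * indicator E w) - c)
      = simple_integral \<Omega> P (\<lambda>w. (\<Sum>E\<in>EE. a E * indicator E w) - c)"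
    by (rule integ_simple[OF fa pba_abs_le_1[OF P] simple_fn_indicator_combination[OF EE]])
  also have "\<dots> = (\<Sum>E\<in>EE. simple_integral \<Omega> P (\<lambda>w. a E * indicator E w)) - c * P \<Omega>"
    using ind EE(1)
    by (simp add: simple_integral_diff[OF fa] simple_integral_sum[OF fa] simple_integral_const[OF fa]
        simple_fn_sum simple_fn_const)
  also have "\<dots> = (\<Sum>E\<in>EE. a E * P E) - c"
    using EE by (auto intro!: sum.cong simp: pba_space[OF P] simple_integral_cmult[OF fa]
        simple_integral_indicator[OF fa] simple_fn_indicator)
  finally show ?thesis .
qed

end

section \<open>Mixtures and weak* closures\<close>

definition mix :: "real \<Rightarrow> ('a \<Rightarrow> real) \<Rightarrow> ('a \<Rightarrow> real) \<Rightarrow> 'a \<Rightarrow> real" where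
  "mix r \<mu> \<nu> = (\<lambda>E. (1 - r) * \<mu> E + r * \<nu> E)"

lemma simple_integral_mixture:
  "simple_integral \<Omega> (\<lambda>E. \<Sum>k\<in>K. c k * m k E) s = (\<Sum>k\<in>K. c k * simple_integral \<Omega> (m k) s)"
  unfolding simple_integral_def
  by (simp add: sum_distrib_left sum.swap[of _ K] mult.left_commute)

lemma conv_sf_singleton: "m \<in> S \<Longrightarrow> m \<in> conv_sf S"
  unfolding conv_sf_def by (intro CollectI exI[of _ "{0::nat}"] exI[of _ "\<lambda>_. 1"] exI[of _ "\<lambda>_. m"]) auto

lemma sum_even_odd_images:
  fixes h :: "nat \<Rightarrow> 'b::comm_monoid_add"
  assumes "finite K1" "finite K2"
  shows "(\<Sum>k\<in>(\<lambda>k. 2 * k) ` K1 \<union> (\<lambda>k. 2 * k + 1) ` K2. h k) = (\<Sum>k\<in>K1. h (2 * k)) + (\<Sum>k\<in>K2. h (2 * k + 1))"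
proof -
  have disj: "(\<lambda>k. 2 * k) ` K1 \<inter> (\<lambda>k. 2 * k + 1) ` K2 = {}" by auto presburger
  have inj: "inj_on (\<lambda>k::nat. 2 * k) K1" "inj_on (\<lambda>k::nat. 2 * k + 1) K2" by (auto intro: inj_onI)
  show ?thesis
    using sum.union_disjoint[OF finite_imageI[OF assms(1)] finite_imageI[OF assms(2)] disj, of h]
      sum.reindex[OF inj(1), of h] sum.reindex[OF inj(2), of h] by simp
qed

lemma conv_sf_mix:
  assumes \<nu>1: "\<nu>1 \<in> conv_sf S" and \<nu>2: "\<nu>2 \<in> conv_sf S" and r: "0 \<le> r" "r \<le> 1"
  shows "mix r \<nu>1 \<nu>2 \<in> conv_sf S"
proof -
  obtain K1 :: "nat set" and c1 m1 where K1: "finite K1" "\<forall>k\<in>K1. 0 \<le> c1 k \<and> m1 k \<in> S" "sum c1 K1 = 1"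
    "\<nu>1 = (\<lambda>E. \<Sum>k\<in>K1. c1 k * m1 k E)" using \<nu>1 unfolding conv_sf_def by blast
  obtain K2 :: "nat set" and c2 m2 where K2: "finite K2" "\<forall>k\<in>K2. 0 \<le> c2 k \<and> m2 k \<in> S" "sum c2 K2 = 1"
    "\<nu>2 = (\<lambda>E. \<Sum>k\<in>K2. c2 k * m2 k E)" using \<nu>2 unfolding conv_sf_def by blast
  define K where "K = (\<lambda>k. 2 * k) ` K1 \<union> (\<lambda>k. 2 * k + 1) ` K2"
  define c where "c k = (if even k then (1 - r) * c1 (k div 2) else r * c2 (k div 2))" for k :: nat
  define m where "m k = (if even k then m1 (k div 2) else m2 (k div 2))" for k :: nat
  have "finite K" "\<forall>k\<in>K. 0 \<le> c k \<and> m k \<in> S"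
    unfolding K_def c_def m_def using K1 K2 r by auto
  moreover have "sum c K = 1"
    unfolding K_def sum_even_odd_images[OF K1(1) K2(1)]
    using K1(3) K2(3) by (simp add: c_def sum_distrib_left[symmetric])
  moreover have "mix r \<nu>1 \<nu>2 = (\<lambda>E. \<Sum>k\<in>K. c k * m k E)"
    unfolding K_def sum_even_odd_images[OF K1(1) K2(1)] K1(4) K2(4) mix_def
    by (simp add: c_def m_def sum_distrib_left mult.assoc)
  ultimately show ?thesis unfolding conv_sf_def by blast
qed

lemma wstar_closureI:
  assumes "\<mu> \<in> ba \<Omega> M"
    and "\<And>F e. finite F \<Longrightarrow> F \<subseteq> Bsp \<Omega> M \<Longrightarrow> 0 < e \<Longrightarrow>
      \<exists>\<nu>\<in>S. \<forall>f\<in>F. \<bar>integ \<Omega> M \<mu> f - integ \<Omega> M \<nu> f\<bar> < e"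
  shows "\<mu> \<in> wstar_closure \<Omega> M S"
  using assms unfolding wstar_closure_def by blast

lemma wstar_closureD:
  "\<mu> \<in> wstar_closure \<Omega> M S \<Longrightarrow> finite F \<Longrightarrow> F \<subseteq> Bsp \<Omega> M \<Longrightarrow> 0 < e \<Longrightarrow>
    \<exists>\<nu>\<in>S. \<forall>f\<in>F. \<bar>integ \<Omega> M \<mu> f - integ \<Omega> M \<nu> f\<bar> < e"
  unfolding wstar_closure_def by blast

lemma wstar_closure_ba: "\<mu> \<in> wstar_closure \<Omega> M S \<Longrightarrow> \<mu> \<in> ba \<Omega> M"
  unfolding wstar_closure_def by blast

lemma wstar_closure_approx:
  assumes "\<mu> \<in> wstar_closure \<Omega> M S" "f \<in> Bsp \<Omega> M" "0 < e"
  obtains \<nu> where "\<nu> \<in> S" "\<bar>integ \<Omega> M \<mu> f - integ \<Omega> M \<nu> f\<bar> < e"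
  using wstar_closureD[OF assms(1), of "{f}"] assms(2,3) by auto

lemma subset_wstar_closure: "S \<subseteq> ba \<Omega> M \<Longrightarrow> S \<subseteq> wstar_closure \<Omega> M S"
proof
  fix \<mu> assume "S \<subseteq> ba \<Omega> M" "\<mu> \<in> S"
  then show "\<mu> \<in> wstar_closure \<Omega> M S" by (intro wstar_closureI bexI[of _ \<mu>]) auto
qed

lemma wstar_closure_integ_nonneg:
  assumes \<mu>: "\<mu> \<in> wstar_closure \<Omega> M S" and f: "f \<in> Bsp \<Omega> M"
    and nonneg: "\<And>\<nu>. \<nu> \<in> S \<Longrightarrow> 0 \<le> integ \<Omega> M \<nu> f"
  shows "0 \<le> integ \<Omega> M \<mu> f"
proof (rule ccontr)
  assume "\<not> 0 \<le> integ \<Omega> M \<mu> f"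
  then obtain \<nu> where "\<nu> \<in> S" "\<bar>integ \<Omega> M \<mu> f - integ \<Omega> M \<nu> f\<bar> < - integ \<Omega> M \<mu> f"
    using wstar_closure_approx[OF \<mu> f] by (metis neg_0_less_iff_less not_le)
  then show False using nonneg by force
qed

context algebra
begin

lemma pba_mixture:
  assumes K: "finite K" "\<And>k. k \<in> K \<Longrightarrow> 0 \<le> c k \<and> m k \<in> pba \<Omega> M" "sum c K = 1"
  shows "(\<lambda>E. \<Sum>k\<in>K. c k * m k E) \<in> pba \<Omega> M"
  unfolding pba_def
proof (intro CollectI conjI ballI allI impI)
  show "fin_add M (\<lambda>E. \<Sum>k\<in>K. c k * m k E)"
    unfolding fin_add_def
  proof (intro ballI impI)
    fix E G assume "E \<in> M" "G \<in> M" "E \<inter> G = {}"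
    then have "m k (E \<union> G) = m k E + m k G" if "k \<in> K" for k
      using K(2)[OF that] unfolding pba_def fin_add_def by blast
    then show "(\<Sum>k\<in>K. c k * m k (E \<union> G)) = (\<Sum>k\<in>K. c k * m k E) + (\<Sum>k\<in>K. c k * m k G)"
      by (simp add: distrib_left sum.distrib)
  qed
  show "(\<Sum>k\<in>K. c k * m k \<Omega>) = 1"
    using K(2,3) by (simp add: pba_space)
  fix E
  show "E \<in> M \<Longrightarrow> 0 \<le> (\<Sum>k\<in>K. c k * m k E)"
    using K(2) pba_range(1) by (auto intro!: sum_nonneg mult_nonneg_nonneg)
  show "E \<notin> M \<Longrightarrow> (\<Sum>k\<in>K. c k * m k E) = 0"
    using K(2) unfolding pba_def by simp
qed

lemma integ_limit_pba:
  "P \<in> pba \<Omega> M \<Longrightarrow> simple_approx_seq \<Omega> M f s \<Longrightarrow>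
    (\<lambda>n. simple_integral \<Omega> P (s n)) \<longlonglongrightarrow> integ \<Omega> M P f"
  using integ_limit[OF pba_fin_add pba_abs_le_1] .

lemma integ_approx_pba:
  "P \<in> pba \<Omega> M \<Longrightarrow> f \<in> Bsp \<Omega> M \<Longrightarrow> simple_fn \<Omega> M s \<Longrightarrow>
    (\<And>w. w \<in> \<Omega> \<Longrightarrow> \<bar>f w - s w\<bar> \<le> e) \<Longrightarrow> 0 \<le> e \<Longrightarrow>
    \<bar>integ \<Omega> M P f - simple_integral \<Omega> P s\<bar> \<le> 2 * e"
  using integ_approx[OF pba_fin_add pba_abs_le_1] by fastforce

lemma integ_mixture:
  assumes K: "finite K" "\<And>k. k \<in> K \<Longrightarrow> 0 \<le> c k \<and> m k \<in> pba \<Omega> M" "sum c K = 1"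
    and f: "f \<in> Bsp \<Omega> M"
  shows "integ \<Omega> M (\<lambda>E. \<Sum>k\<in>K. c k * m k E) f = (\<Sum>k\<in>K. c k * integ \<Omega> M (m k) f)"
proof -
  obtain s where s: "simple_approx_seq \<Omega> M f s" using f by (rule Bsp_simple_approx_seq)
  have "(\<lambda>n. simple_integral \<Omega> (\<lambda>E. \<Sum>k\<in>K. c k * m k E) (s n))
      \<longlonglongrightarrow> integ \<Omega> M (\<lambda>E. \<Sum>k\<in>K. c k * m k E) f"
    by (rule integ_limit_pba[OF pba_mixture[OF K] s])
  moreover have "(\<lambda>n. simple_integral \<Omega> (\<lambda>E. \<Sum>k\<in>K. c k * m k E) (s n))
      \<longlonglongrightarrow> (\<Sum>k\<in>K. c k * integ \<Omega> M (m k) f)"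
    unfolding simple_integral_mixture
    using K(2) by (intro tendsto_sum tendsto_mult tendsto_const integ_limit_pba[OF _ s]) blast
  ultimately show ?thesis by (rule LIMSEQ_unique)
qed

lemma mix_eq_mixture:
  "mix r \<mu> \<nu> = (\<lambda>E. \<Sum>k\<in>{0::nat, 1}. (if k = 0 then 1 - r else r) * (if k = 0 then \<mu> else \<nu>) E)"
  by (simp add: mix_def)

lemma pba_mix:
  "\<mu> \<in> pba \<Omega> M \<Longrightarrow> \<nu> \<in> pba \<Omega> M \<Longrightarrow> 0 \<le> r \<Longrightarrow> r \<le> 1 \<Longrightarrow> mix r \<mu> \<nu> \<in> pba \<Omega> M"
  unfolding mix_eq_mixture by (rule pba_mixture) auto

lemma integ_mix:
  "\<mu> \<in> pba \<Omega> M \<Longrightarrow> \<nu> \<in> pba \<Omega> M \<Longrightarrow> 0 \<le> r \<Longrightarrow> r \<le> 1 \<Longrightarrow> f \<in> Bsp \<Omega> M \<Longrightarrow>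
    integ \<Omega> M (mix r \<mu> \<nu>) f = (1 - r) * integ \<Omega> M \<mu> f + r * integ \<Omega> M \<nu> f"
  unfolding mix_eq_mixture by (subst integ_mixture) auto

lemma conv_sf_subset_pba: "S \<subseteq> pba \<Omega> M \<Longrightarrow> conv_sf S \<subseteq> pba \<Omega> M"
  unfolding conv_sf_def by (auto intro!: pba_mixture)

lemma conv_sf_integ_nonneg:
  assumes S: "S \<subseteq> pba \<Omega> M" and \<nu>: "\<nu> \<in> conv_sf S" and f: "f \<in> Bsp \<Omega> M"
    and nonneg: "\<And>m. m \<in> S \<Longrightarrow> 0 \<le> integ \<Omega> M m f"
  shows "0 \<le> integ \<Omega> M \<nu> f"
proof -
  obtain K :: "nat set" and c m where K: "finite K" "\<forall>k\<in>K. 0 \<le> c k \<and> m k \<in> S" "sum c K = 1"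
    and \<nu>_eq: "\<nu> = (\<lambda>E. \<Sum>k\<in>K. c k * m k E)"
    using \<nu> unfolding conv_sf_def by blast
  have "integ \<Omega> M \<nu> f = (\<Sum>k\<in>K. c k * integ \<Omega> M (m k) f)"
    unfolding \<nu>_eq using K S f by (intro integ_mixture) auto
  also have "\<dots> \<ge> 0" using K(2) nonneg by (intro sum_nonneg) simp
  finally show ?thesis .
qed

lemma wstar_closure_subset_pba:
  assumes S: "S \<subseteq> pba \<Omega> M"
  shows "wstar_closure \<Omega> M S \<subseteq> pba \<Omega> M"
proof
  fix \<mu> assume \<mu>: "\<mu> \<in> wstar_closure \<Omega> M S"
  then have \<mu>_ba: "\<mu> \<in> ba \<Omega> M" by (rule wstar_closure_ba)
  have close: "\<exists>\<nu>\<in>S. \<bar>\<mu> E - \<nu> E\<bar> < e" if E: "E \<in> M" and "0 < e" for E e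
  proof -
    obtain \<nu> where \<nu>: "\<nu> \<in> S" "\<bar>integ \<Omega> M \<mu> (indicator E) - integ \<Omega> M \<nu> (indicator E)\<bar> < e"
      using wstar_closure_approx[OF \<mu> simple_fn_in_Bsp[OF simple_fn_indicator[OF E]] \<open>0 < e\<close>] .
    have "integ \<Omega> M \<nu> (indicator E) = \<nu> E"
      using \<nu>(1) S pba_subset_ba by (intro integ_indicator[OF _ E]) blast
    with \<nu> show ?thesis using integ_indicator[OF \<mu>_ba E] by auto
  qed
  have "0 \<le> \<mu> E" if E: "E \<in> M" for E
  proof (rule ccontr)
    assume "\<not> 0 \<le> \<mu> E"
    then obtain \<nu> where "\<nu> \<in> S" "\<bar>\<mu> E - \<nu> E\<bar> < - \<mu> E" using close[OF E, of "- \<mu> E"] by auto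
    moreover have "0 \<le> \<nu> E" using \<open>\<nu> \<in> S\<close> S pba_range(1)[OF _ E] by blast
    ultimately show False by linarith
  qed
  moreover have "\<mu> \<Omega> = 1"
  proof (rule ccontr)
    assume "\<mu> \<Omega> \<noteq> 1"
    then obtain \<nu> where "\<nu> \<in> S" "\<bar>\<mu> \<Omega> - \<nu> \<Omega>\<bar> < \<bar>\<mu> \<Omega> - 1\<bar>"
      using close[OF top, of "\<bar>\<mu> \<Omega> - 1\<bar>"] by auto
    moreover have "\<nu> \<Omega> = 1" using \<open>\<nu> \<in> S\<close> S pba_space by blast
    ultimately show False by simp
  qed
  ultimately show "\<mu> \<in> pba \<Omega> M" using \<mu>_ba unfolding ba_def pba_def by blast
qed

lemma wstar_closure_mix:
  assumes S: "S \<subseteq> pba \<Omega> M"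
    and S_mix: "\<And>\<nu>1 \<nu>2 r. \<nu>1 \<in> S \<Longrightarrow> \<nu>2 \<in> S \<Longrightarrow> 0 \<le> r \<Longrightarrow> r \<le> 1 \<Longrightarrow> mix r \<nu>1 \<nu>2 \<in> S"
    and \<mu>: "\<mu>1 \<in> wstar_closure \<Omega> M S" "\<mu>2 \<in> wstar_closure \<Omega> M S" and r: "0 \<le> r" "r \<le> 1"
  shows "mix r \<mu>1 \<mu>2 \<in> wstar_closure \<Omega> M S"
proof (rule wstar_closureI)
  have \<mu>_pba: "\<mu>1 \<in> pba \<Omega> M" "\<mu>2 \<in> pba \<Omega> M" using \<mu> wstar_closure_subset_pba[OF S] by blast+
  then show "mix r \<mu>1 \<mu>2 \<in> ba \<Omega> M" using pba_mix r pba_subset_ba by blast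
  fix F e assume F: "finite F" "F \<subseteq> Bsp \<Omega> M" "0 < (e::real)"
  obtain \<nu>1 \<nu>2 where \<nu>: "\<nu>1 \<in> S" "\<nu>2 \<in> S"
    and close: "\<forall>f\<in>F. \<bar>integ \<Omega> M \<mu>1 f - integ \<Omega> M \<nu>1 f\<bar> < e" "\<forall>f\<in>F. \<bar>integ \<Omega> M \<mu>2 f - integ \<Omega> M \<nu>2 f\<bar> < e"
    using wstar_closureD[OF \<mu>(1) F] wstar_closureD[OF \<mu>(2) F] by blast
  have "\<bar>integ \<Omega> M (mix r \<mu>1 \<mu>2) f - integ \<Omega> M (mix r \<nu>1 \<nu>2) f\<bar> < e" if f: "f \<in> F" for f
  proof -
    let ?d1 = "integ \<Omega> M \<mu>1 f - integ \<Omega> M \<nu>1 f" and ?d2 = "integ \<Omega> M \<mu>2 f - integ \<Omega> M \<nu>2 f"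
    have "integ \<Omega> M (mix r \<mu>1 \<mu>2) f - integ \<Omega> M (mix r \<nu>1 \<nu>2) f = (1 - r) * ?d1 + r * ?d2"
      using \<mu>_pba \<nu> S r f F(2) by (simp add: integ_mix subset_iff algebra_simps)
    also have "\<bar>\<dots>\<bar> \<le> (1 - r) * \<bar>?d1\<bar> + r * \<bar>?d2\<bar>"
      using r by (simp add: abs_mult order_trans[OF abs_triangle_ineq])
    also have "\<dots> \<le> max \<bar>?d1\<bar> \<bar>?d2\<bar>" using r by (intro convex_bound_le) auto
    also have "\<dots> < e" using close f by simp
    finally show ?thesis .
  qed
  then show "\<exists>\<nu>\<in>S. \<forall>f\<in>F. \<bar>integ \<Omega> M (mix r \<mu>1 \<mu>2) f - integ \<Omega> M \<nu> f\<bar> < e"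
    using S_mix[OF \<nu> r] by blast
qed

end

section \<open>Compactness in the topology of setwise convergence\<close>

lemma compact_functions_into:
  fixes S :: "'a \<Rightarrow> 'b::topological_space set"
  assumes "\<And>x. compact (S x)"
  shows "compact {f. \<forall>x. f x \<in> S x}"
proof -
  have "{f. \<forall>x. f x \<in> S x} = PiE UNIV S" by (auto simp: PiE_def Pi_def)
  moreover have "compactin (product_topology (\<lambda>_. euclidean) UNIV) (PiE UNIV S)"
    using assms by (simp add: compactin_PiE compactin_euclidean_iff)
  ultimately show ?thesis by (simp add: euclidean_product_topology compactin_euclidean_iff)
qed

lemma continuous_on_apply [continuous_intros]:
  "continuous_on S (\<lambda>\<nu>::'a \<Rightarrow> 'b::topological_space. \<nu> x)"
  by (rule continuous_on_subset[OF continuous_on_product_coordinates subset_UNIV])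

lemma continuous_on_apply2 [continuous_intros]:
  "continuous_on S (\<lambda>Q::'a \<Rightarrow> 'b \<Rightarrow> 'c::topological_space. Q x y)"
  by (rule continuous_on_product_then_coordinatewise[OF continuous_on_apply])

lemma closed_agreement: "closed {Q :: 'i \<Rightarrow> 'e \<Rightarrow> real. \<forall>E\<in>EE. \<forall>i\<in>I. \<forall>j\<in>I. Q i E = Q j E}"
proof -
  have "{Q :: 'i \<Rightarrow> 'e \<Rightarrow> real. \<forall>E\<in>EE. \<forall>i\<in>I. \<forall>j\<in>I. Q i E = Q j E}
      = (\<Inter>E\<in>EE. \<Inter>i\<in>I. \<Inter>j\<in>I. {Q. Q i E = Q j E})" by auto
  also have "closed \<dots>" by (intro closed_INT ballI closed_Collect_eq continuous_on_apply2)
  finally show ?thesis .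
qed

lemma continuous_on_simple_integral: "continuous_on U (\<lambda>\<nu>. simple_integral \<Omega> \<nu> s)"
  unfolding simple_integral_def by (intro continuous_intros)

context algebra
begin

lemma closed_pba: "closed (pba \<Omega> M)"
proof -
  have "pba \<Omega> M = {P. (\<forall>E G. E \<in> M \<and> G \<in> M \<and> E \<inter> G = {} \<longrightarrow> P (E \<union> G) = P E + P G) \<and>
     (\<forall>E. E \<in> M \<longrightarrow> 0 \<le> P E) \<and> P \<Omega> = 1 \<and> (\<forall>E. E \<notin> M \<longrightarrow> P E = 0)}"
    unfolding pba_def fin_add_def by blast
  also have "closed \<dots>"
    by (intro closed_Collect_conj closed_Collect_all closed_Collect_imp closed_Collect_eq
        closed_Collect_le continuous_intros open_Collect_const)
  finally show ?thesis .
qed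

lemma compact_pba: "compact (pba \<Omega> M)"
proof -
  have "P E \<in> {0..1}" if "P \<in> pba \<Omega> M" for P E
    using that pba_range[OF that] by (cases "E \<in> M") (auto simp: pba_def)
  then have "{P. \<forall>E. P E \<in> {0..1}} \<inter> pba \<Omega> M = pba \<Omega> M" by blast
  moreover have "compact ({P. \<forall>E. P E \<in> {0..1}} \<inter> pba \<Omega> M)"
    by (intro compact_Int_closed compact_functions_into compact_Icc closed_pba)
  ultimately show ?thesis by simp
qed

lemma closed_wstar_closure:
  assumes S: "S \<subseteq> pba \<Omega> M"
  shows "closed (wstar_closure \<Omega> M S)"
proof -
  let ?W = "wstar_closure \<Omega> M S"
  have "\<mu> \<in> ?W" if \<mu>: "\<mu> \<in> closure ?W" for \<mu>
  proof (rule wstar_closureI)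
    have \<mu>_pba: "\<mu> \<in> pba \<Omega> M"
      using closure_minimal[OF wstar_closure_subset_pba[OF S] closed_pba] \<mu> by blast
    then show "\<mu> \<in> ba \<Omega> M" using pba_subset_ba by blast
    fix F e assume F: "finite F" "F \<subseteq> Bsp \<Omega> M" "0 < (e::real)"
    obtain sg where sg: "\<And>g. g \<in> F \<Longrightarrow> simple_fn \<Omega> M (sg g)"
      "\<And>g w. g \<in> F \<Longrightarrow> w \<in> \<Omega> \<Longrightarrow> \<bar>g w - sg g w\<bar> \<le> e / 8"
      using Bsp_simple_approx_family[OF F(2), of "e / 8"] F(3) by auto
    define T where "T = (\<Inter>g\<in>F. {\<nu>. \<bar>simple_integral \<Omega> \<mu> (sg g) - simple_integral \<Omega> \<nu> (sg g)\<bar> < e / 4})"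
    have "open T"
      unfolding T_def using F(1)
      by (intro open_INT ballI open_Collect_less continuous_intros continuous_on_simple_integral)
    moreover have "\<mu> \<in> T" unfolding T_def using F by simp
    ultimately obtain \<nu>' where \<nu>': "\<nu>' \<in> ?W" "\<nu>' \<in> T"
      using \<mu> open_Int_closure_eq_empty by blast
    then have \<nu>'_pba: "\<nu>' \<in> pba \<Omega> M" using wstar_closure_subset_pba[OF S] by blast
    obtain \<nu> where \<nu>: "\<nu> \<in> S" "\<forall>g\<in>F. \<bar>integ \<Omega> M \<nu>' g - integ \<Omega> M \<nu> g\<bar> < e / 4"
      using wstar_closureD[OF \<nu>'(1) F(1,2), of "e / 4"] F(3) by auto
    have "\<bar>integ \<Omega> M \<mu> g - integ \<Omega> M \<nu> g\<bar> < e" if g: "g \<in> F" for g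
    proof -
      have approx: "\<bar>integ \<Omega> M P g - simple_integral \<Omega> P (sg g)\<bar> \<le> e / 4" if "P \<in> pba \<Omega> M" for P
        using integ_approx_pba[OF that _ sg(1)[OF g] sg(2)[OF g]] g F by auto
      have "\<bar>simple_integral \<Omega> \<mu> (sg g) - simple_integral \<Omega> \<nu>' (sg g)\<bar> < e / 4"
        using \<nu>'(2) g unfolding T_def by blast
      moreover have "\<bar>integ \<Omega> M \<nu>' g - integ \<Omega> M \<nu> g\<bar> < e / 4" using \<nu>(2) g by blast
      ultimately show ?thesis
        using approx[OF \<mu>_pba] approx[OF \<nu>'_pba] by (simp only: abs_le_iff abs_less_iff) linarith
    qed
    then show "\<exists>\<nu>\<in>S. \<forall>g\<in>F. \<bar>integ \<Omega> M \<mu> g - integ \<Omega> M \<nu> g\<bar> < e" using \<nu>(1) by blast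
  qed
  then show ?thesis using closure_subset_eq by blast
qed

lemma compact_wstar_closure:
  assumes "S \<subseteq> pba \<Omega> M" shows "compact (wstar_closure \<Omega> M S)"
proof -
  have "pba \<Omega> M \<inter> wstar_closure \<Omega> M S = wstar_closure \<Omega> M S"
    using wstar_closure_subset_pba[OF assms] by blast
  moreover have "compact (pba \<Omega> M \<inter> wstar_closure \<Omega> M S)"
    by (intro compact_Int_closed compact_pba closed_wstar_closure assms)
  ultimately show ?thesis by simp
qed

end

section \<open>Separation by least dispersion\<close>

definition profile_mean :: "'i set \<Rightarrow> ('i \<Rightarrow> 'e \<Rightarrow> real) \<Rightarrow> 'e \<Rightarrow> real" where
  "profile_mean I Q E = (\<Sum>j\<in>I. Q j E) / real (card I)"

definition profile_dev :: "'i set \<Rightarrow> ('i \<Rightarrow> 'e \<Rightarrow> real) \<Rightarrow> 'i \<Rightarrow> 'e \<Rightarrow> real" where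
  "profile_dev I Q i E = Q i E - profile_mean I Q E"

definition dispersion :: "'i set \<Rightarrow> 'e set \<Rightarrow> ('i \<Rightarrow> 'e \<Rightarrow> real) \<Rightarrow> real" where
  "dispersion I EE Q = (\<Sum>E\<in>EE. \<Sum>i\<in>I. (profile_dev I Q i E)\<^sup>2)"

lemma sum_profile_dev: "finite I \<Longrightarrow> I \<noteq> {} \<Longrightarrow> (\<Sum>i\<in>I. profile_dev I Q i E) = 0"
  unfolding profile_dev_def profile_mean_def by (simp add: sum_subtractf)

lemma profile_mean_mix:
  "profile_mean I (\<lambda>i. mix r (Q1 i) (Q2 i)) E = (1 - r) * profile_mean I Q1 E + r * profile_mean I Q2 E"
  unfolding profile_mean_def mix_def by (simp add: sum.distrib sum_distrib_left add_divide_distrib)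

lemma profile_dev_mix:
  "profile_dev I (\<lambda>i. mix r (Q1 i) (Q2 i)) i E = (1 - r) * profile_dev I Q1 i E + r * profile_dev I Q2 i E"
  unfolding profile_dev_def profile_mean_mix by (simp add: mix_def algebra_simps)

lemma continuous_on_dispersion: "finite I \<Longrightarrow> continuous_on K (dispersion I EE)"
  unfolding dispersion_def profile_dev_def profile_mean_def
  by (intro continuous_intros continuous_on_product_then_coordinatewise) auto

lemma nonneg_if_quadratic_nonneg:
  fixes a b :: real
  assumes b: "0 \<le> b" and h: "\<And>r. 0 < r \<Longrightarrow> r \<le> 1 \<Longrightarrow> 0 \<le> 2 * r * a + r\<^sup>2 * b"
  shows "0 \<le> a"
proof (rule ccontr)
  assume "\<not> 0 \<le> a"
  define r where "r = min 1 (- a / (b + 1))"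
  have r: "0 < r" "r \<le> 1" unfolding r_def using \<open>\<not> 0 \<le> a\<close> b by (auto simp: divide_neg_pos)
  have "r * b \<le> - a / (b + 1) * b" unfolding r_def using b by (intro mult_right_mono) auto
  also have "\<dots> < - a" using \<open>\<not> 0 \<le> a\<close> b by (simp add: field_simps)
  finally have "2 * a + r * b < 0" using \<open>\<not> 0 \<le> a\<close> by linarith
  then have "r * (2 * a + r * b) < 0" using r(1) by (simp add: mult_pos_neg)
  then show False using h[OF r] by (simp add: power2_eq_square algebra_simps)
qed

lemma dispersion_minimiser_variational:
  fixes K :: "('i \<Rightarrow> 'e \<Rightarrow> real) set"
  assumes I: "finite I" "I \<noteq> {}"
    and K_mix: "\<And>Q1 Q2 r. Q1 \<in> K \<Longrightarrow> Q2 \<in> K \<Longrightarrow> 0 \<le> r \<Longrightarrow> r \<le> 1 \<Longrightarrow> (\<lambda>i. mix r (Q1 i) (Q2 i)) \<in> K"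
    and Qs: "Qs \<in> K" "\<And>Q. Q \<in> K \<Longrightarrow> dispersion I EE Qs \<le> dispersion I EE Q"
    and Q: "Q \<in> K"
  shows "dispersion I EE Qs \<le> (\<Sum>i\<in>I. \<Sum>E\<in>EE. profile_dev I Qs i E * Q i E)"
proof -
  let ?u = "profile_dev I Qs" and ?v = "profile_dev I Q"
  define a where "a = (\<Sum>E\<in>EE. \<Sum>i\<in>I. ?u i E * (?v i E - ?u i E))"
  define b where "b = (\<Sum>E\<in>EE. \<Sum>i\<in>I. (?v i E - ?u i E)\<^sup>2)"
  have "0 \<le> 2 * r * a + r\<^sup>2 * b" if r: "0 < r" "r \<le> 1" for r
  proof -
    have "(profile_dev I (\<lambda>i. mix r (Qs i) (Q i)) i E)\<^sup>2
        = (?u i E)\<^sup>2 + (2 * r * (?u i E * (?v i E - ?u i E)) + r\<^sup>2 * (?v i E - ?u i E)\<^sup>2)" for i E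
      unfolding profile_dev_mix by (simp add: power2_eq_square algebra_simps)
    then have "dispersion I EE (\<lambda>i. mix r (Qs i) (Q i)) = dispersion I EE Qs + (2 * r * a + r\<^sup>2 * b)"
      unfolding dispersion_def a_def b_def by (simp add: sum.distrib sum_distrib_left)
    moreover have "dispersion I EE Qs \<le> dispersion I EE (\<lambda>i. mix r (Qs i) (Q i))"
      using r by (intro Qs(2) K_mix[OF Qs(1) Q]) auto
    ultimately show ?thesis by simp
  qed
  then have "0 \<le> a" by (rule nonneg_if_quadratic_nonneg[rotated]) (auto simp: b_def intro!: sum_nonneg)
  moreover have "(\<Sum>i\<in>I. ?u i E * ?v i E) = (\<Sum>i\<in>I. ?u i E * Q i E)" for E
    using sum_profile_dev[OF I, of Qs E]
    unfolding profile_dev_def[of I Q] by (simp add: right_diff_distrib sum_subtractf sum_distrib_right[symmetric])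
  ultimately show ?thesis
    unfolding a_def dispersion_def
    by (simp add: right_diff_distrib sum_subtractf power2_eq_square sum.swap[of _ I])
qed

lemma separating_weights:
  fixes K :: "('i \<Rightarrow> 'e \<Rightarrow> real) set"
  assumes I: "finite I" "I \<noteq> {}" and EE: "finite EE" and K: "compact K" "K \<noteq> {}"
    and K_mix: "\<And>Q1 Q2 r. Q1 \<in> K \<Longrightarrow> Q2 \<in> K \<Longrightarrow> 0 \<le> r \<Longrightarrow> r \<le> 1 \<Longrightarrow> (\<lambda>i. mix r (Q1 i) (Q2 i)) \<in> K"
    and disagree: "\<And>Q. Q \<in> K \<Longrightarrow> \<exists>E\<in>EE. \<exists>i\<in>I. \<exists>j\<in>I. Q i E \<noteq> Q j E"
  obtains a where "\<And>E. (\<Sum>i\<in>I. a i E) = 0" "\<And>Q. Q \<in> K \<Longrightarrow> 0 < (\<Sum>i\<in>I. \<Sum>E\<in>EE. a i E * Q i E)"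
proof -
  obtain Qs where Qs: "Qs \<in> K" "\<And>Q. Q \<in> K \<Longrightarrow> dispersion I EE Qs \<le> dispersion I EE Q"
    using continuous_attains_inf[OF K continuous_on_dispersion[OF I(1)]] by blast
  have "0 < dispersion I EE Qs"
  proof (rule ccontr)
    assume "\<not> 0 < dispersion I EE Qs"
    moreover have "0 \<le> dispersion I EE Qs" unfolding dispersion_def by (intro sum_nonneg) simp
    ultimately have "dispersion I EE Qs = 0" by simp
    then have "\<forall>E\<in>EE. \<forall>i\<in>I. profile_dev I Qs i E = 0"
      using EE I by (simp add: dispersion_def sum_nonneg sum_nonneg_eq_0_iff)
    then show False using disagree[OF Qs(1)] unfolding profile_dev_def by auto
  qed
  then have "0 < (\<Sum>i\<in>I. \<Sum>E\<in>EE. profile_dev I Qs i E * Q i E)" if "Q \<in> K" for Q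
    using dispersion_minimiser_variational[OF I K_mix Qs that] by linarith
  with sum_profile_dev[OF I] show ?thesis by (rule that)
qed

section \<open>Type spaces\<close>

lemma semi_bet_nonneg:
  assumes "semi_bet N \<Omega> M t I f" "w \<in> \<Omega>" "i \<in> I"
  shows "0 \<le> integ \<Omega> M (belief M t i w) (f i)"
proof -
  obtain S where "w \<in> S" "S \<subseteq> {w'\<in>\<Omega>. \<forall>i\<in>I. integ \<Omega> M (belief M t i w') (f i) \<ge> 0}"
    using assms(1,2) unfolding semi_bet_def commonly_certain_def by blast
  then show ?thesis using assms(3) by blast
qed

locale type_space_model =
  fixes N :: "'i set" and Omega :: "'w set" and A :: "'w set set"
    and M :: "'i \<Rightarrow> 'w set set" and t :: "'i \<Rightarrow> 'w \<Rightarrow> 'w set \<Rightarrow> real"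
  assumes type_space: "type_space N Omega A M t"
begin

sublocale algebra Omega A
  using type_space unfolding type_space_def is_field_iff_algebra by blast

lemma belief_in_pba: "i \<in> N \<Longrightarrow> w \<in> Omega \<Longrightarrow> belief A t i w \<in> pba Omega A"
  using type_space unfolding type_space_def by blast

lemma t_space_eq_1:
  assumes "i \<in> N" "w \<in> Omega" shows "t i w Omega = 1"
proof -
  have "is_field Omega (M i)" "\<forall>E\<in>M i. \<forall>w\<in>E. t i w E = 1"
    using type_space assms(1) unfolding type_space_def by blast+
  then show ?thesis using assms(2) unfolding is_field_def by blast
qed

lemma beliefs_hull_subset_pba: "i \<in> N \<Longrightarrow> conv_sf (belief A t i ` Omega) \<subseteq> pba Omega A"
  using belief_in_pba by (intro conv_sf_subset_pba) blast

lemma Pi_set_subset_pba: "i \<in> N \<Longrightarrow> Pi_set Omega A t i \<subseteq> pba Omega A"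
  unfolding Pi_set_def by (intro wstar_closure_subset_pba beliefs_hull_subset_pba)

lemma belief_in_Pi_set: "i \<in> N \<Longrightarrow> w \<in> Omega \<Longrightarrow> belief A t i w \<in> Pi_set Omega A t i"
  unfolding Pi_set_def using beliefs_hull_subset_pba pba_subset_ba
  by (intro subsetD[OF subset_wstar_closure] conv_sf_singleton) blast+

lemma closed_Pi_set: "i \<in> N \<Longrightarrow> closed (Pi_set Omega A t i)"
  unfolding Pi_set_def by (intro closed_wstar_closure beliefs_hull_subset_pba)

lemma compact_Pi_set: "i \<in> N \<Longrightarrow> compact (Pi_set Omega A t i)"
  unfolding Pi_set_def by (intro compact_wstar_closure beliefs_hull_subset_pba)

lemma Pi_set_mix:
  "i \<in> N \<Longrightarrow> \<mu>1 \<in> Pi_set Omega A t i \<Longrightarrow> \<mu>2 \<in> Pi_set Omega A t i \<Longrightarrow> 0 \<le> r \<Longrightarrow> r \<le> 1 \<Longrightarrow>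
    mix r \<mu>1 \<mu>2 \<in> Pi_set Omega A t i"
  unfolding Pi_set_def by (intro wstar_closure_mix beliefs_hull_subset_pba conv_sf_mix)

lemma Pi_set_integ_nonneg:
  assumes i: "i \<in> N" and \<mu>: "\<mu> \<in> Pi_set Omega A t i" and f: "f \<in> Bsp Omega A"
    and nonneg: "\<And>w. w \<in> Omega \<Longrightarrow> 0 \<le> integ Omega A (belief A t i w) f"
  shows "0 \<le> integ Omega A \<mu> f"
  using \<mu>[unfolded Pi_set_def] f
proof (rule wstar_closure_integ_nonneg)
  fix \<nu> assume \<nu>: "\<nu> \<in> conv_sf (belief A t i ` Omega)"
  show "0 \<le> integ Omega A \<nu> f"
    by (rule conv_sf_integ_nonneg[OF _ \<nu> f]) (use belief_in_pba[OF i] nonneg in auto)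
qed

lemma common_prior_if_consistent:
  assumes "consistent N Omega A t"
  obtains Q where "Q \<in> pba Omega A" "\<And>i. i \<in> N \<Longrightarrow> Q \<in> Pi_set Omega A t i"
proof -
  obtain i0 where i0: "i0 \<in> N" using type_space unfolding type_space_def by blast
  have "pba Omega A \<inter> (\<Inter>i\<in>N. Pi_set Omega A t i) \<noteq> {}"
  proof (rule compact_imp_fip_image[OF compact_pba closed_Pi_set])
    fix I assume I: "finite I" "I \<subseteq> N"
    then have "(\<Inter>i\<in>insert i0 I. Pi_set Omega A t i) \<noteq> {}"
      using assms i0 unfolding consistent_def by blast
    moreover have "(\<Inter>i\<in>insert i0 I. Pi_set Omega A t i) \<subseteq> pba Omega A \<inter> (\<Inter>i\<in>I. Pi_set Omega A t i)"
      using Pi_set_subset_pba[OF i0] by blast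
    ultimately show "pba Omega A \<inter> (\<Inter>i\<in>I. Pi_set Omega A t i) \<noteq> {}" by blast
  qed
  then show ?thesis using that by blast
qed

lemma not_money_pump_if_consistent:
  assumes "consistent N Omega A t"
  shows "\<not> money_pump N Omega A t"
proof -
  obtain Q where Q: "Q \<in> pba Omega A" "\<And>i. i \<in> N \<Longrightarrow> Q \<in> Pi_set Omega A t i"
    using common_prior_if_consistent[OF assms] by blast
  have "0 \<le> integ Omega A Q (\<lambda>w. \<Sum>i\<in>I. f i w)" if bet: "semi_bet N Omega A t I f" for I f
  proof -
    have I: "finite I" "I \<subseteq> N" "\<And>i. i \<in> I \<Longrightarrow> f i \<in> Bsp Omega A"
      using bet unfolding semi_bet_def by blast+
    have "integ Omega A Q (\<lambda>w. \<Sum>i\<in>I. f i w) = (\<Sum>i\<in>I. integ Omega A Q (f i))"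
      by (rule integ_sum[OF pba_fin_add[OF Q(1)] pba_abs_le_1[OF Q(1)] I(1) I(3)])
    also have "\<dots> \<ge> 0"
    proof (rule sum_nonneg)
      fix i assume i: "i \<in> I"
      show "0 \<le> integ Omega A Q (f i)"
        by (rule Pi_set_integ_nonneg[of i]) (use i I Q(2) semi_bet_nonneg[OF bet] in auto)
    qed
    finally show ?thesis .
  qed
  then show ?thesis unfolding money_pump_def using Q(1) by (meson not_less)
qed

text \<open>Bets accepted in every state form a semi-bet, with \<open>Omega\<close> itself as the common
  certainty component.\<close>

lemma money_pump_if_sure_loss:
  assumes I: "finite I" "I \<subseteq> N" and f: "\<And>i. i \<in> I \<Longrightarrow> f i \<in> Bsp Omega A"
    and accepted: "\<And>i w. i \<in> I \<Longrightarrow> w \<in> Omega \<Longrightarrow> 0 \<le> integ Omega A (belief A t i w) (f i)"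
    and loss: "\<And>w. (\<Sum>i\<in>I. f i w) = - c" "0 < c"
  shows "money_pump N Omega A t"
proof -
  have "semi_bet N Omega A t I f"
    unfolding semi_bet_def
  proof (intro conjI ballI I f)
    fix w assume w: "w \<in> Omega"
    have "cc_component Omega A t I Omega"
      unfolding cc_component_def using w top t_space_eq_1 I(2) by blast
    moreover have "{w'\<in>Omega. \<forall>i\<in>I. 0 \<le> integ Omega A (belief A t i w') (f i)} = Omega"
      using accepted by blast
    ultimately show "commonly_certain Omega A t I
        {w'\<in>Omega. \<forall>i\<in>I. 0 \<le> integ Omega A (belief A t i w') (f i)} w"
      unfolding commonly_certain_def using w by auto
  qed
  moreover have "integ Omega A P (\<lambda>w. \<Sum>i\<in>I. f i w) = - c" if P: "P \<in> pba Omega A" for P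
    using integ_simple[OF pba_fin_add[OF P] pba_abs_le_1[OF P] simple_fn_const]
      simple_integral_const[OF pba_fin_add[OF P]] pba_space[OF P]
    by (simp add: loss(1))
  ultimately show ?thesis unfolding money_pump_def using loss(2) by (metis neg_less_0_iff_less)
qed

definition prior_profiles :: "'i set \<Rightarrow> ('i \<Rightarrow> 'w set \<Rightarrow> real) set" where
  "prior_profiles I = {Q. \<forall>i. Q i \<in> (if i \<in> I then Pi_set Omega A t i else {\<lambda>E. 0})}"

lemma compact_prior_profiles: "I \<subseteq> N \<Longrightarrow> compact (prior_profiles I)"
  unfolding prior_profiles_def by (intro compact_functions_into) (auto intro: compact_Pi_set)

lemma beliefs_in_prior_profiles:
  "w \<in> Omega \<Longrightarrow> I \<subseteq> N \<Longrightarrow> (\<lambda>i. if i \<in> I then belief A t i w else (\<lambda>E. 0)) \<in> prior_profiles I"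
  unfolding prior_profiles_def using belief_in_Pi_set by auto

lemma prior_profilesD:
  assumes "Q \<in> prior_profiles I"
  shows "i \<in> I \<Longrightarrow> Q i \<in> Pi_set Omega A t i" "i \<notin> I \<Longrightarrow> Q i = (\<lambda>E. 0)"
  using assms[unfolded prior_profiles_def, THEN CollectD, THEN spec[of _ i]] by auto

lemma prior_profiles_mix:
  assumes I: "I \<subseteq> N" and Q: "Q1 \<in> prior_profiles I" "Q2 \<in> prior_profiles I" and r: "0 \<le> r" "r \<le> 1"
  shows "(\<lambda>i. mix r (Q1 i) (Q2 i)) \<in> prior_profiles I"
proof -
  have "mix r (Q1 i) (Q2 i) \<in> (if i \<in> I then Pi_set Omega A t i else {\<lambda>E. 0})" for i
  proof (cases "i \<in> I")
    case True
    then have "i \<in> N" "Q1 i \<in> Pi_set Omega A t i" "Q2 i \<in> Pi_set Omega A t i"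
      using Q I prior_profilesD(1) by auto
    then show ?thesis using Pi_set_mix r True by simp
  next
    case False
    then show ?thesis using Q prior_profilesD(2) by (simp add: mix_def)
  qed
  then show ?thesis unfolding prior_profiles_def by blast
qed

lemma unanimous_prior_profile:
  assumes Q: "Q \<in> prior_profiles I" and I: "I \<subseteq> N" "i0 \<in> I"
    and unanimous: "\<And>E i. E \<in> A \<Longrightarrow> i \<in> I \<Longrightarrow> Q i E = Q i0 E"
  shows "Q i0 \<in> (\<Inter>i\<in>I. Pi_set Omega A t i)"
proof -
  have Q_pba: "Q i \<in> pba Omega A" if "i \<in> I" for i
    using prior_profilesD(1)[OF Q that] Pi_set_subset_pba that I(1) by blast
  have "Q i = Q i0" if "i \<in> I" for i
  proof
    fix E show "Q i E = Q i0 E"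
    proof (cases "E \<in> A")
      case True
      then show ?thesis using unanimous that by blast
    next
      case False
      then show ?thesis using Q_pba[OF that] Q_pba[OF I(2)] unfolding pba_def by simp
    qed
  qed
  then show ?thesis using prior_profilesD(1)[OF Q] by auto
qed

lemma finite_disagreement:
  assumes I: "finite I" "I \<subseteq> N" and empty: "(\<Inter>i\<in>I. Pi_set Omega A t i) = {}"
  obtains EE where "finite EE" "EE \<subseteq> A"
    "\<And>Q. Q \<in> prior_profiles I \<Longrightarrow> \<exists>E\<in>EE. \<exists>i\<in>I. \<exists>j\<in>I. Q i E \<noteq> Q j E"
proof -
  define agree where
    "agree EE = {Q :: 'i \<Rightarrow> 'w set \<Rightarrow> real. \<forall>E\<in>EE. \<forall>i\<in>I. \<forall>j\<in>I. Q i E = Q j E}" for EE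
  have "\<exists>EE. finite EE \<and> EE \<subseteq> A \<and> prior_profiles I \<inter> agree EE = {}"
  proof (rule ccontr)
    assume none: "\<nexists>EE. finite EE \<and> EE \<subseteq> A \<and> prior_profiles I \<inter> agree EE = {}"
    have "prior_profiles I \<inter> (\<Inter>EE\<in>{EE. finite EE \<and> EE \<subseteq> A}. agree EE) \<noteq> {}"
    proof (rule compact_imp_fip_image[OF compact_prior_profiles[OF I(2)]])
      show "closed (agree EE)" for EE unfolding agree_def by (rule closed_agreement)
      fix G assume "finite G" "G \<subseteq> {EE. finite EE \<and> EE \<subseteq> A}"
      then have "finite (\<Union>G)" "\<Union>G \<subseteq> A" by auto
      then have "prior_profiles I \<inter> agree (\<Union>G) \<noteq> {}" using none by blast
      moreover have "agree (\<Union>G) \<subseteq> (\<Inter>EE\<in>G. agree EE)" unfolding agree_def by blast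
      ultimately show "prior_profiles I \<inter> (\<Inter>EE\<in>G. agree EE) \<noteq> {}" by blast
    qed
    then obtain Q where Q: "Q \<in> prior_profiles I" "\<And>E. E \<in> A \<Longrightarrow> Q \<in> agree {E}" by blast
    obtain i0 where i0: "i0 \<in> I" using empty by auto
    have "Q i E = Q i0 E" if "E \<in> A" "i \<in> I" for E i
      using Q(2)[OF that(1)] that(2) i0 unfolding agree_def by blast
    then have "Q i0 \<in> (\<Inter>i\<in>I. Pi_set Omega A t i)" by (rule unanimous_prior_profile[OF Q(1) I(2) i0])
    with empty show False by blast
  qed
  then obtain EE where EE: "finite EE" "EE \<subseteq> A" "prior_profiles I \<inter> agree EE = {}" by blast
  show ?thesis
  proof (rule that[OF EE(1,2)])
    fix Q assume "Q \<in> prior_profiles I"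
    with EE(3) show "\<exists>E\<in>EE. \<exists>i\<in>I. \<exists>j\<in>I. Q i E \<noteq> Q j E" unfolding agree_def by blast
  qed
qed

lemma money_pump_if_separating_weights:
  assumes I: "finite I" "I \<subseteq> N" and EE: "finite EE" "EE \<subseteq> A" and Omega: "Omega \<noteq> {}"
    and a: "\<And>E. (\<Sum>i\<in>I. a i E) = 0"
      "\<And>Q. Q \<in> prior_profiles I \<Longrightarrow> 0 < (\<Sum>i\<in>I. \<Sum>E\<in>EE. a i E * Q i E)"
  shows "money_pump N Omega A t"
proof -
  have "\<exists>\<mu>\<in>Pi_set Omega A t i. \<forall>\<nu>\<in>Pi_set Omega A t i. (\<Sum>E\<in>EE. a i E * \<mu> E) \<le> (\<Sum>E\<in>EE. a i E * \<nu> E)"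
    if "i \<in> I" for i
    using that I(2) Omega belief_in_Pi_set
    by (intro continuous_attains_inf compact_Pi_set continuous_intros) auto
  then obtain \<mu> where \<mu>: "\<And>i. i \<in> I \<Longrightarrow> \<mu> i \<in> Pi_set Omega A t i"
    "\<And>i \<nu>. i \<in> I \<Longrightarrow> \<nu> \<in> Pi_set Omega A t i \<Longrightarrow> (\<Sum>E\<in>EE. a i E * \<mu> i E) \<le> (\<Sum>E\<in>EE. a i E * \<nu> E)"
    by metis
  define c where "c i = (\<Sum>E\<in>EE. a i E * \<mu> i E)" for i
  define f where "f i = (\<lambda>w. (\<Sum>E\<in>EE. a i E * indicator E w) - c i)" for i
  show ?thesis
  proof (rule money_pump_if_sure_loss[OF I, of f "\<Sum>i\<in>I. c i"])
    show "f i \<in> Bsp Omega A" for i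
      unfolding f_def by (intro simple_fn_in_Bsp simple_fn_indicator_combination EE)
    show "0 \<le> integ Omega A (belief A t i w) (f i)" if i: "i \<in> I" and w: "w \<in> Omega" for i w
    proof -
      have "i \<in> N" using i I(2) by blast
      have "integ Omega A (belief A t i w) (f i) = (\<Sum>E\<in>EE. a i E * belief A t i w E) - c i"
        unfolding f_def by (rule integ_indicator_combination[OF belief_in_pba[OF \<open>i \<in> N\<close> w] EE])
      moreover have "c i \<le> (\<Sum>E\<in>EE. a i E * belief A t i w E)"
        unfolding c_def by (rule \<mu>(2)[OF i belief_in_Pi_set[OF \<open>i \<in> N\<close> w]])
      ultimately show ?thesis by simp
    qed
    show "(\<Sum>i\<in>I. f i w) = - (\<Sum>i\<in>I. c i)" for w
    proof -
      have "(\<Sum>i\<in>I. \<Sum>E\<in>EE. a i E * indicator E w) = (\<Sum>E\<in>EE. (\<Sum>i\<in>I. a i E) * indicator E w)"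
        by (simp add: sum.swap[of _ I] sum_distrib_right)
      then show ?thesis using a(1) by (simp add: f_def sum_subtractf)
    qed
    have "(\<lambda>i. if i \<in> I then \<mu> i else (\<lambda>E. 0)) \<in> prior_profiles I"
      using \<mu>(1) unfolding prior_profiles_def by simp
    then show "0 < (\<Sum>i\<in>I. c i)"
      using a(2) by (force simp: c_def)
  qed
qed

lemma money_pump_if_inconsistent:
  assumes "\<not> consistent N Omega A t"
  shows "money_pump N Omega A t"
proof (cases "Omega = {}")
  case True
  then have "pba Omega A = {}" using pba_space pba_fin_add fin_add_empty by fastforce
  then show ?thesis unfolding money_pump_def by blast
next
  case False
  obtain I where I: "finite I" "I \<subseteq> N" and empty: "(\<Inter>i\<in>I. Pi_set Omega A t i) = {}"
    using assms unfolding consistent_def by blast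
  obtain EE where EE: "finite EE" "EE \<subseteq> A"
    and disagree: "\<And>Q. Q \<in> prior_profiles I \<Longrightarrow> \<exists>E\<in>EE. \<exists>i\<in>I. \<exists>j\<in>I. Q i E \<noteq> Q j E"
    using finite_disagreement[OF I empty] by blast
  have "I \<noteq> {}" using empty by auto
  moreover have "prior_profiles I \<noteq> {}" using beliefs_in_prior_profiles I(2) False by blast
  ultimately obtain a where "\<And>E. (\<Sum>i\<in>I. a i E) = 0" "\<And>Q. Q \<in> prior_profiles I \<Longrightarrow> 0 < (\<Sum>i\<in>I. \<Sum>E\<in>EE. a i E * Q i E)"
    using separating_weights[OF I(1) _ EE(1) compact_prior_profiles[OF I(2)] _ prior_profiles_mix[OF I(2)]
        disagree] by blast
  then show ?thesis by (rule money_pump_if_separating_weights[OF I EE False])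
qed

end

theorem theorem3:
  fixes N :: "'i set" and Omega :: "'w set" and A :: "'w set set"
    and M :: "'i \<Rightarrow> 'w set set" and t :: "'i \<Rightarrow> 'w \<Rightarrow> 'w set \<Rightarrow> real"
  assumes "type_space N Omega A M t"
  shows "consistent N Omega A t \<longleftrightarrow> \<not> money_pump N Omega A t"
proof -
  interpret type_space_model N Omega A M t by (rule type_space_model.intro[OF assms])
  show ?thesis using not_money_pump_if_consistent money_pump_if_inconsistent by blast
qed

end
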